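(* Let $A$ be a metabelian Lie $U$-algebra over a field $k$ and let $A_\Delta$ be its $\Delta$-localisation. Then $A$ and $A_\Delta$ are universally equivalent, i.e. $\mathrm{ucl}(A)=\mathrm{ucl}(A_\Delta)$: they satisfy exactly the same universal sentences of the first-order language of Lie $k$-algebras.
   Context: All algebras are over a fixed field $k$. A Lie algebra is metabelian if $(a\circ b)\circ(c\circ d)=0$ identically; $A^2$ is the ideal spanned by all products; $\mathrm{Fit}(A)$ (Fitting radical) is the ideal generated by all elements lying in nilpotent ideals of $A$. A metabelian Lie algebra $A$ is a $U$-algebra if $\mathrm{Fit}(A)$ is abelian and torsion-free as a module over $R=k[x_\alpha:\alpha\in\Lambda]$, where $\{z_\alpha:\alpha\in\Lambda\}\subseteq A$ is a family whose images form a basis of $A/\mathrm{Fit}(A)$ and the module structure is $b\cdot x_\alpha=b\circ z_\alpha$ for $b\in\mathrm{Fit}(A)$, extended multiplicatively and linearly. $\Delta$-localisation: let $V$ be the $k$-span of $\{z_\alpha\}$, $\Delta$ the ideal of $R$ generated by all $x_\alpha$, $R_\Delta$ the localisation of $R$ at $\Delta$, and $\mathrm{Fit}_\Delta(A)=R_\Delta\otimes_R\mathrm{Fit}(A)$ (containing $\mathrm{Fit}(A)$). $A_\Delta$ is the $k$-space $V\oplus\mathrm{Fit}_\Delta(A)$ with bracket: for $v,w\in V$, $v\circ w$ is the product in $A$ (an element of $\mathrm{Fit}(A)$); products of two elements of $\mathrm{Fit}_\Delta(A)$ are $0$; $u\circ z_\alpha=u\cdot x_\alpha=-z_\alpha\circ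 u$ for $u\in\mathrm{Fit}_\Delta(A)$, extended bilinearly. It is a metabelian Lie algebra containing $A=V\oplus\mathrm{Fit}(A)$ as a subalgebra. The first-order language of Lie $k$-algebras has symbols $\circ,+,-,0$ and a unary function symbol for multiplication by each scalar of $k$; $\mathrm{ucl}(B)$ is the class of Lie $k$-algebras satisfying all universal sentences of this language true in $B$. *)

theory Defs
  imports Main "HOL-Library.Poly_Mapping"
begin

record ('k, 'a) lie_alg =
  la_carrier :: "'a set"
  la_zero :: 'a
  la_add :: "'a \<Rightarrow> 'a \<Rightarrow> 'a"
  la_neg :: "'a \<Rightarrow> 'a"
  la_smul :: "'k \<Rightarrow> 'a \<Rightarrow> 'a"
  la_br :: "'a \<Rightarrow> 'a \<Rightarrow> 'a"

definition lie_alg :: "('k::field, 'a) lie_alg \<Rightarrow> bool" where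
  "lie_alg A \<longleftrightarrow>
    (let C = la_carrier A; z = la_zero A; ad = la_add A; ng = la_neg A;
         sm = la_smul A; br = la_br A in
     z \<in> C \<and>
     (\<forall>x\<in>C. \<forall>y\<in>C. ad x y \<in> C) \<and>
     (\<forall>x\<in>C. ng x \<in> C) \<and>
     (\<forall>c. \<forall>x\<in>C. sm c x \<in> C) \<and>
     (\<forall>x\<in>C. \<forall>y\<in>C. br x y \<in> C) \<and>
     (\<forall>x\<in>C. \<forall>y\<in>C. \<forall>w\<in>C. ad (ad x y) w = ad x (ad y w)) \<and>
     (\<forall>x\<in>C. \<forall>y\<in>C. ad x y = ad y x) \<and>
     (\<forall>x\<in>C. ad z x = x) \<and>
     (\<forall>x\<in>C. ad x (ng x) = z) \<and>
     (\<forall>c. \<forall>x\<in>C. \<forall>y\<in>C. sm c (ad x y) = ad (sm c x) (sm c y)) \<and>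
     (\<forall>c d. \<forall>x\<in>C. sm (c + d) x = ad (sm c x) (sm d x)) \<and>
     (\<forall>c d. \<forall>x\<in>C. sm (c * d) x = sm c (sm d x)) \<and>
     (\<forall>x\<in>C. sm 1 x = x) \<and>
     (\<forall>x\<in>C. \<forall>y\<in>C. \<forall>w\<in>C. br (ad x y) w = ad (br x w) (br y w)) \<and>
     (\<forall>x\<in>C. \<forall>y\<in>C. \<forall>w\<in>C. br x (ad y w) = ad (br x y) (br x w)) \<and>
     (\<forall>c. \<forall>x\<in>C. \<forall>y\<in>C. br (sm c x) y = sm c (br x y)) \<and>
     (\<forall>c. \<forall>x\<in>C. \<forall>y\<in>C. br x (sm c y) = sm c (br x y)) \<and>
     (\<forall>x\<in>C. br x x = z) \<and>
     (\<forall>x\<in>C. \<forall>y\<in>C. \<forall>w\<in>C.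
        ad (ad (br x (br y w)) (br y (br w x))) (br w (br x y)) = z))"

definition metabelian :: "('k, 'a) lie_alg \<Rightarrow> bool" where
  "metabelian A \<longleftrightarrow> (\<forall>a\<in>la_carrier A. \<forall>b\<in>la_carrier A. \<forall>c\<in>la_carrier A. \<forall>d\<in>la_carrier A.
      la_br A (la_br A a b) (la_br A c d) = la_zero A)"

primrec lsum :: "('k, 'a) lie_alg \<Rightarrow> 'a list \<Rightarrow> 'a" where
  "lsum A [] = la_zero A"
| "lsum A (x # xs) = la_add A x (lsum A xs)"

inductive_set lspan :: "('k, 'a) lie_alg \<Rightarrow> 'a set \<Rightarrow> 'a set" for A X where
  lspan_zero: "la_zero A \<in> lspan A X"
| lspan_gen: "x \<in> X \<Longrightarrow> x \<in> lspan A X"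
| lspan_add: "x \<in> lspan A X \<Longrightarrow> y \<in> lspan A X \<Longrightarrow> la_add A x y \<in> lspan A X"
| lspan_smul: "x \<in> lspan A X \<Longrightarrow> la_smul A c x \<in> lspan A X"

definition is_ideal :: "('k, 'a) lie_alg \<Rightarrow> 'a set \<Rightarrow> bool" where
  "is_ideal A I \<longleftrightarrow> I \<subseteq> la_carrier A \<and> la_zero A \<in> I \<and>
     (\<forall>x\<in>I. \<forall>y\<in>I. la_add A x y \<in> I) \<and> (\<forall>c. \<forall>x\<in>I. la_smul A c x \<in> I) \<and>
     (\<forall>x\<in>I. \<forall>a\<in>la_carrier A. la_br A x a \<in> I \<and> la_br A a x \<in> I)"

primrec lcs :: "('k, 'a) lie_alg \<Rightarrow> 'a set \<Rightarrow> nat \<Rightarrow> 'a set" where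
  "lcs A I 0 = I"
| "lcs A I (Suc n) = lspan A {la_br A x y | x y. x \<in> lcs A I n \<and> y \<in> I}"

definition nilpotent_ideal :: "('k, 'a) lie_alg \<Rightarrow> 'a set \<Rightarrow> bool" where
  "nilpotent_ideal A I \<longleftrightarrow> is_ideal A I \<and> (\<exists>n. lcs A I n = {la_zero A})"

definition ideal_gen :: "('k, 'a) lie_alg \<Rightarrow> 'a set \<Rightarrow> 'a set" where
  "ideal_gen A X = \<Inter>{J. is_ideal A J \<and> X \<subseteq> J}"

definition Fit :: "('k, 'a) lie_alg \<Rightarrow> 'a set" where
  "Fit A = ideal_gen A (\<Union>{I. nilpotent_ideal A I})"

type_synonym ('i, 'k) mpoly = "('i \<Rightarrow>\<^sub>0 nat) \<Rightarrow>\<^sub>0 'k"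

definition Xvar :: "'i \<Rightarrow> ('i, 'k::field) mpoly" where
  "Xvar \<alpha> = Poly_Mapping.single (Poly_Mapping.single \<alpha> 1) 1"

inductive_set Delta :: "('i, 'k::field) mpoly set" where
  Delta_zero: "0 \<in> Delta"
| Delta_gen: "q * Xvar \<alpha> \<in> Delta"
| Delta_add: "p \<in> Delta \<Longrightarrow> q \<in> Delta \<Longrightarrow> p + q \<in> Delta"

definition word_act :: "('k, 'a) lie_alg \<Rightarrow> ('i \<Rightarrow> 'a) \<Rightarrow> 'i list \<Rightarrow> 'a \<Rightarrow> 'a" where
  "word_act A z xs b = fold (\<lambda>\<alpha> c. la_br A c (z \<alpha>)) xs b"

definition mono_act :: "('k, 'a) lie_alg \<Rightarrow> ('i \<Rightarrow> 'a) \<Rightarrow> ('i \<Rightarrow>\<^sub>0 nat) \<Rightarrow> 'a \<Rightarrow> 'a" where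
  "mono_act A z m b = word_act A z (SOME xs. \<forall>\<alpha>. count_list xs \<alpha> = Poly_Mapping.lookup m \<alpha>) b"

definition poly_act :: "('k::field, 'a) lie_alg \<Rightarrow> ('i \<Rightarrow> 'a) \<Rightarrow> ('i, 'k) mpoly \<Rightarrow> 'a \<Rightarrow> 'a" where
  "poly_act A z p b = lsum A (map (\<lambda>m. la_smul A (Poly_Mapping.lookup p m) (mono_act A z m b))
                                  (SOME xs. distinct xs \<and> set xs = Poly_Mapping.keys p))"

definition basis_mod_Fit :: "('k::field, 'a) lie_alg \<Rightarrow> ('i \<Rightarrow> 'a) \<Rightarrow> bool" where
  "basis_mod_Fit A z \<longleftrightarrow>
     (\<forall>\<alpha>. z \<alpha> \<in> la_carrier A) \<and>
     (\<forall>a\<in>la_carrier A. \<exists>v\<in>lspan A (range z). \<exists>f\<in>Fit A. a = la_add A v f) \<and>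
     (\<forall>xs c. distinct xs \<longrightarrow> lsum A (map (\<lambda>\<alpha>. la_smul A (c \<alpha>) (z \<alpha>)) xs) \<in> Fit A
              \<longrightarrow> (\<forall>\<alpha>\<in>set xs. c \<alpha> = 0))"

definition U_algebra :: "('k::field, 'a) lie_alg \<Rightarrow> ('i \<Rightarrow> 'a) \<Rightarrow> bool" where
  "U_algebra A z \<longleftrightarrow> lie_alg A \<and> metabelian A \<and> basis_mod_Fit A z \<and>
     (\<forall>x\<in>Fit A. \<forall>y\<in>Fit A. la_br A x y = la_zero A) \<and>
     (\<forall>p b. p \<noteq> 0 \<longrightarrow> b \<in> Fit A \<longrightarrow> poly_act A z p b = la_zero A \<longrightarrow> b = la_zero A)"

text \<open>Elements of A_Delta = V + Fit_Delta(A) are classes of triples (v, m, s) standing for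
  v + m/s with v in V, m in Fit(A), s in R - Delta.\<close>

type_synonym ('i, 'k, 'a) ltriple = "'a \<times> 'a \<times> ('i, 'k) mpoly"

definition loc_triples :: "('k::field, 'a) lie_alg \<Rightarrow> ('i \<Rightarrow> 'a) \<Rightarrow> ('i, 'k, 'a) ltriple set" where
  "loc_triples A z = {(v, m, s). v \<in> lspan A (range z) \<and> m \<in> Fit A \<and> s \<notin> Delta}"

definition loc_rel :: "('k::field, 'a) lie_alg \<Rightarrow> ('i \<Rightarrow> 'a) \<Rightarrow>
    ('i, 'k, 'a) ltriple \<Rightarrow> ('i, 'k, 'a) ltriple \<Rightarrow> bool" where
  "loc_rel A z t t' \<longleftrightarrow> (case t of (v, m, s) \<Rightarrow> case t' of (v', m', s') \<Rightarrow>
     v = v' \<and> (\<exists>u. u \<notin> Delta \<and>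
       poly_act A z u (la_add A (poly_act A z s' m) (la_neg A (poly_act A z s m'))) = la_zero A))"

definition loc_cls :: "('k::field, 'a) lie_alg \<Rightarrow> ('i \<Rightarrow> 'a) \<Rightarrow>
    ('i, 'k, 'a) ltriple \<Rightarrow> ('i, 'k, 'a) ltriple set" where
  "loc_cls A z t = {t' \<in> loc_triples A z. loc_rel A z t t'}"

definition loc_rep :: "('i, 'k, 'a) ltriple set \<Rightarrow> ('i, 'k, 'a) ltriple" where
  "loc_rep Q = (SOME t. t \<in> Q)"

definition loc_Delta :: "('k::field, 'a) lie_alg \<Rightarrow> ('i \<Rightarrow> 'a) \<Rightarrow> ('k, ('i, 'k, 'a) ltriple set) lie_alg" where
  "loc_Delta A z =
    (let act = poly_act A z; ad = la_add A; ng = la_neg A; br = la_br A; cl = loc_cls A z in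
    \<lparr> la_carrier = loc_cls A z ` loc_triples A z,
      la_zero = cl (la_zero A, la_zero A, 1),
      la_add = (\<lambda>Q Q'. case loc_rep Q of (v, m, s) \<Rightarrow> case loc_rep Q' of (v', m', s') \<Rightarrow>
                  cl (ad v v', ad (act s' m) (act s m'), s * s')),
      la_neg = (\<lambda>Q. case loc_rep Q of (v, m, s) \<Rightarrow> cl (ng v, ng m, s)),
      la_smul = (\<lambda>c Q. case loc_rep Q of (v, m, s) \<Rightarrow> cl (la_smul A c v, la_smul A c m, s)),
      la_br = (\<lambda>Q Q'. case loc_rep Q of (v, m, s) \<Rightarrow> case loc_rep Q' of (v', m', s') \<Rightarrow>
                  cl (la_zero A,
                      ad (ad (act (s * s') (br v v')) (act s' (br m v'))) (ng (act s (br m' v))),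
                      s * s')) \<rparr>)"

datatype 'k ltm = TVar nat | TZero | TAdd "'k ltm" "'k ltm" | TNeg "'k ltm"
  | TSmul 'k "'k ltm" | TBr "'k ltm" "'k ltm"

datatype 'k lfm = FEq "'k ltm" "'k ltm" | FFalse | FNot "'k lfm" | FAnd "'k lfm" "'k lfm"
  | FOr "'k lfm" "'k lfm" | FImp "'k lfm" "'k lfm" | FAll nat "'k lfm" | FEx nat "'k lfm"

primrec tm_vars :: "'k ltm \<Rightarrow> nat set" where
  "tm_vars (TVar n) = {n}"
| "tm_vars TZero = {}"
| "tm_vars (TAdd s t) = tm_vars s \<union> tm_vars t"
| "tm_vars (TNeg t) = tm_vars t"
| "tm_vars (TSmul c t) = tm_vars t"
| "tm_vars (TBr s t) = tm_vars s \<union> tm_vars t"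

primrec fm_free :: "'k lfm \<Rightarrow> nat set" where
  "fm_free (FEq s t) = tm_vars s \<union> tm_vars t"
| "fm_free FFalse = {}"
| "fm_free (FNot p) = fm_free p"
| "fm_free (FAnd p q) = fm_free p \<union> fm_free q"
| "fm_free (FOr p q) = fm_free p \<union> fm_free q"
| "fm_free (FImp p q) = fm_free p \<union> fm_free q"
| "fm_free (FAll x p) = fm_free p - {x}"
| "fm_free (FEx x p) = fm_free p - {x}"

primrec qfree :: "'k lfm \<Rightarrow> bool" where
  "qfree (FEq s t) = True"
| "qfree FFalse = True"
| "qfree (FNot p) = qfree p"
| "qfree (FAnd p q) = (qfree p \<and> qfree q)"
| "qfree (FOr p q) = (qfree p \<and> qfree q)"
| "qfree (FImp p q) = (qfree p \<and> qfree q)"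
| "qfree (FAll x p) = False"
| "qfree (FEx x p) = False"

fun universal :: "'k lfm \<Rightarrow> bool" where
  "universal (FAll x p) = universal p"
| "universal p = qfree p"

definition universal_sentence :: "'k lfm \<Rightarrow> bool" where
  "universal_sentence p \<longleftrightarrow> universal p \<and> fm_free p = {}"

primrec tm_eval :: "('k, 'a) lie_alg \<Rightarrow> (nat \<Rightarrow> 'a) \<Rightarrow> 'k ltm \<Rightarrow> 'a" where
  "tm_eval A e (TVar n) = e n"
| "tm_eval A e TZero = la_zero A"
| "tm_eval A e (TAdd s t) = la_add A (tm_eval A e s) (tm_eval A e t)"
| "tm_eval A e (TNeg t) = la_neg A (tm_eval A e t)"
| "tm_eval A e (TSmul c t) = la_smul A c (tm_eval A e t)"
| "tm_eval A e (TBr s t) = la_br A (tm_eval A e s) (tm_eval A e t)"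

primrec holds :: "('k, 'a) lie_alg \<Rightarrow> (nat \<Rightarrow> 'a) \<Rightarrow> 'k lfm \<Rightarrow> bool" where
  "holds A e (FEq s t) = (tm_eval A e s = tm_eval A e t)"
| "holds A e FFalse = False"
| "holds A e (FNot p) = (\<not> holds A e p)"
| "holds A e (FAnd p q) = (holds A e p \<and> holds A e q)"
| "holds A e (FOr p q) = (holds A e p \<or> holds A e q)"
| "holds A e (FImp p q) = (holds A e p \<longrightarrow> holds A e q)"
| "holds A e (FAll x p) = (\<forall>a\<in>la_carrier A. holds A (e(x := a)) p)"
| "holds A e (FEx x p) = (\<exists>a\<in>la_carrier A. holds A (e(x := a)) p)"

definition satisfies :: "('k, 'a) lie_alg \<Rightarrow> 'k lfm \<Rightarrow> bool" where
  "satisfies A p \<longleftrightarrow> (\<forall>e. (\<forall>n. e n \<in> la_carrier A) \<longrightarrow> holds A e p)"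

definition universally_equivalent :: "('k, 'a) lie_alg \<Rightarrow> ('k, 'b) lie_alg \<Rightarrow> bool" where
  "universally_equivalent A B \<longleftrightarrow>
     (\<forall>p. universal_sentence p \<longrightarrow> (satisfies A p \<longleftrightarrow> satisfies B p))"

end

theory Submission
  imports Defs
begin

(*
  A embeds into A_Delta as the fractions with denominator 1, so universal sentences
  pass from A_Delta down to A. Conversely, a universal sentence failing in A_Delta fails
  at finitely many elements, and these can be written over one denominator s outside
  Delta, normalised to have constant term 1. As Fit(A) is an abelian ideal on which
  R acts torsion-freely, the fractions v + m/s (v in V, m in Fit(A)) form a subalgebra,
  and s - 1 in Delta yields a linear map t : A -> Fit(A) with
  [t v, w] - [t w, v] = (s - 1).[v, w]: for a monomial q x_alpha take t v = q.[v, z_alpha]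
  and use the Jacobi identity. Then v + m/s |-> v + t v + m embeds the subalgebra into A.
*)

section \<open>Universal sentences transfer along local embeddings\<close>

definition subalgebra :: "('k, 'a) lie_alg \<Rightarrow> 'a set \<Rightarrow> bool" where
  "subalgebra B S \<longleftrightarrow> S \<subseteq> la_carrier B \<and> la_zero B \<in> S \<and>
     (\<forall>x\<in>S. \<forall>y\<in>S. la_add B x y \<in> S) \<and> (\<forall>x\<in>S. la_neg B x \<in> S) \<and>
     (\<forall>c. \<forall>x\<in>S. la_smul B c x \<in> S) \<and> (\<forall>x\<in>S. \<forall>y\<in>S. la_br B x y \<in> S)"

definition embedding_on :: "('k, 'a) lie_alg \<Rightarrow> ('k, 'b) lie_alg \<Rightarrow> ('a \<Rightarrow> 'b) \<Rightarrow> 'a set \<Rightarrow> bool" where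
  "embedding_on B1 B2 h S \<longleftrightarrow> h (la_zero B1) = la_zero B2 \<and>
     (\<forall>x\<in>S. \<forall>y\<in>S. h (la_add B1 x y) = la_add B2 (h x) (h y)) \<and>
     (\<forall>x\<in>S. h (la_neg B1 x) = la_neg B2 (h x)) \<and>
     (\<forall>c. \<forall>x\<in>S. h (la_smul B1 c x) = la_smul B2 c (h x)) \<and>
     (\<forall>x\<in>S. \<forall>y\<in>S. h (la_br B1 x y) = la_br B2 (h x) (h y)) \<and>
     (\<forall>x\<in>S. h x \<in> la_carrier B2) \<and> inj_on h S"

lemma tm_eval_embedding:
  assumes "subalgebra B1 S" and "embedding_on B1 B2 h S" and "\<forall>n. e n \<in> S"
  shows "tm_eval B1 e t \<in> S \<and> h (tm_eval B1 e t) = tm_eval B2 (h \<circ> e) t"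
  using assms unfolding subalgebra_def embedding_on_def by (induction t) auto

lemma holds_qfree_embedding:
  assumes S: "subalgebra B1 S" and h: "embedding_on B1 B2 h S" and e: "\<forall>n. e n \<in> S"
    and "qfree p"
  shows "holds B1 e p = holds B2 (h \<circ> e) p"
  using \<open>qfree p\<close>
proof (induction p)
  case (FEq s t)
  note st = tm_eval_embedding[OF S h e, of s] tm_eval_embedding[OF S h e, of t]
  have "inj_on h S" using h by (simp add: embedding_on_def)
  then have "(tm_eval B1 e s = tm_eval B1 e t) = (h (tm_eval B1 e s) = h (tm_eval B1 e t))"
    using st inj_on_eq_iff[of h S "tm_eval B1 e s" "tm_eval B1 e t"] by (simp only:)
  then show ?case using st by (simp add: comp_def)
qed simp_all

lemma tm_eval_cong: "(\<forall>n\<in>tm_vars t. e n = e' n) \<Longrightarrow> tm_eval B e t = tm_eval B e' t"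
  by (induction t) auto

lemma holds_qfree_cong:
  "qfree p \<Longrightarrow> (\<forall>n\<in>fm_free p. e n = e' n) \<Longrightarrow> holds B e p = holds B e' p"
proof (induction p)
  case (FEq s t)
  then show ?case using tm_eval_cong[of s e e' B] tm_eval_cong[of t e e' B] by auto
qed auto

lemma finite_fm_free: "finite (fm_free p)"
proof -
  have "finite (tm_vars t)" for t :: "'k ltm" by (induction t) auto
  then show ?thesis by (induction p) auto
qed

fun matrix :: "'k lfm \<Rightarrow> 'k lfm" where
  "matrix (FAll x p) = matrix p"
| "matrix p = p"

lemma qfree_matrix: "universal p \<Longrightarrow> qfree (matrix p)"
  by (induction p rule: matrix.induct) auto

lemma satisfies_FAll: "satisfies B (FAll x p) = satisfies B p"
  unfolding satisfies_def by (auto, metis fun_upd_triv)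

lemma satisfies_matrix: "satisfies B (matrix p) = satisfies B p"
  by (induction p rule: matrix.induct) (simp_all add: satisfies_FAll)

lemma satisfies_universal_transfer:
  fixes B1 :: "('k, 'a) lie_alg" and B2 :: "('k, 'b) lie_alg"
  assumes "universal p" and "satisfies B2 p"
    and local_emb: "\<And>E. finite E \<Longrightarrow> E \<subseteq> la_carrier B1 \<Longrightarrow>
              \<exists>S h. E \<subseteq> S \<and> subalgebra B1 S \<and> embedding_on B1 B2 h S"
  shows "satisfies B1 p"
proof -
  let ?q = "matrix p"
  have q: "qfree ?q" using \<open>universal p\<close> by (rule qfree_matrix)
  have "holds B1 e ?q" if e: "\<forall>n. e n \<in> la_carrier B1" for e
  proof -
    obtain S h where S: "e ` fm_free ?q \<subseteq> S" "subalgebra B1 S" "embedding_on B1 B2 h S"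
      using local_emb[of "e ` fm_free ?q"] e finite_fm_free by blast
    \<comment> \<open>move the variables not occurring in the formula into \<open>S\<close>\<close>
    define e' where "e' n = (if n \<in> fm_free ?q then e n else la_zero B1)" for n
    have e'S: "\<forall>n. e' n \<in> S" using S by (auto simp: e'_def subalgebra_def)
    have "\<forall>n. (h \<circ> e') n \<in> la_carrier B2" using e'S S(3) by (simp add: embedding_on_def)
    moreover have "satisfies B2 ?q" using \<open>satisfies B2 p\<close> by (simp add: satisfies_matrix)
    ultimately have "holds B2 (h \<circ> e') ?q" by (simp add: satisfies_def)
    then have "holds B1 e' ?q" by (simp add: holds_qfree_embedding[OF S(2,3) e'S q])
    then show ?thesis using holds_qfree_cong[OF q, of e e'] by (simp add: e'_def)
  qed
  then have "satisfies B1 ?q" by (simp add: satisfies_def)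
  then show ?thesis by (simp add: satisfies_matrix)
qed

section \<open>Lie algebras, ideals and the Fitting radical\<close>

definition derived :: "('k, 'a) lie_alg \<Rightarrow> 'a set" where
  "derived A = lspan A {la_br A x y | x y. x \<in> la_carrier A \<and> y \<in> la_carrier A}"

locale lie_algebra =
  fixes A :: "('k::field, 'a) lie_alg"
  assumes lie: "lie_alg A"
begin

abbreviation "C \<equiv> la_carrier A"
abbreviation zero_A ("\<zero>") where "\<zero> \<equiv> la_zero A"
abbreviation add_A (infixl "\<oplus>" 65) where "x \<oplus> y \<equiv> la_add A x y"
abbreviation neg_A ("\<ominus> _" [81] 80) where "\<ominus> x \<equiv> la_neg A x"
abbreviation smul_A (infixr "\<odot>" 75) where "c \<odot> x \<equiv> la_smul A c x"
abbreviation "br \<equiv> la_br A"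
abbreviation "F \<equiv> Fit A"

lemmas lie_alg_unfolded = lie[unfolded lie_alg_def Let_def]

lemma zero_closed[simp]: "\<zero> \<in> C" using lie_alg_unfolded by (elim conjE) (blast | simp)
lemma add_closed[simp]: "x \<in> C \<Longrightarrow> y \<in> C \<Longrightarrow> x \<oplus> y \<in> C" using lie_alg_unfolded by (elim conjE) (blast | simp)
lemma neg_closed[simp]: "x \<in> C \<Longrightarrow> \<ominus> x \<in> C" using lie_alg_unfolded by (elim conjE) (blast | simp)
lemma smul_closed[simp]: "x \<in> C \<Longrightarrow> c \<odot> x \<in> C" using lie_alg_unfolded by (elim conjE) (blast | simp)
lemma br_closed[simp]: "x \<in> C \<Longrightarrow> y \<in> C \<Longrightarrow> br x y \<in> C" using lie_alg_unfolded by (elim conjE) (blast | simp)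
lemma add_assoc: "x \<in> C \<Longrightarrow> y \<in> C \<Longrightarrow> w \<in> C \<Longrightarrow> x \<oplus> y \<oplus> w = x \<oplus> (y \<oplus> w)"
  using lie_alg_unfolded by (elim conjE) (blast | simp)
lemma add_comm: "x \<in> C \<Longrightarrow> y \<in> C \<Longrightarrow> x \<oplus> y = y \<oplus> x"
  using lie_alg_unfolded by (elim conjE) (blast | simp)
lemma add_zero_left[simp]: "x \<in> C \<Longrightarrow> \<zero> \<oplus> x = x" using lie_alg_unfolded by (elim conjE) (blast | simp)
lemma add_neg_right[simp]: "x \<in> C \<Longrightarrow> x \<oplus> \<ominus> x = \<zero>" using lie_alg_unfolded by (elim conjE) (blast | simp)
lemma smul_add_right: "x \<in> C \<Longrightarrow> y \<in> C \<Longrightarrow> c \<odot> (x \<oplus> y) = c \<odot> x \<oplus> c \<odot> y"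
  using lie_alg_unfolded by (elim conjE) (blast | simp)
lemma smul_add_left: "x \<in> C \<Longrightarrow> (c + d) \<odot> x = c \<odot> x \<oplus> d \<odot> x"
  using lie_alg_unfolded by (elim conjE) (blast | simp)
lemma smul_smul: "x \<in> C \<Longrightarrow> (c * d) \<odot> x = c \<odot> d \<odot> x"
  using lie_alg_unfolded by (elim conjE) (blast | simp)
lemma smul_one[simp]: "x \<in> C \<Longrightarrow> 1 \<odot> x = x"
  using lie_alg_unfolded by (elim conjE) (blast | simp)
lemma br_add_left: "x \<in> C \<Longrightarrow> y \<in> C \<Longrightarrow> w \<in> C \<Longrightarrow> br (x \<oplus> y) w = br x w \<oplus> br y w"
  using lie_alg_unfolded by (elim conjE) (blast | simp)
lemma br_add_right: "x \<in> C \<Longrightarrow> y \<in> C \<Longrightarrow> w \<in> C \<Longrightarrow> br x (y \<oplus> w) = br x y \<oplus> br x w"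
  using lie_alg_unfolded by (elim conjE) (blast | simp)
lemma br_smul_left: "x \<in> C \<Longrightarrow> y \<in> C \<Longrightarrow> br (c \<odot> x) y = c \<odot> br x y"
  using lie_alg_unfolded by (elim conjE) (blast | simp)
lemma br_smul_right: "x \<in> C \<Longrightarrow> y \<in> C \<Longrightarrow> br x (c \<odot> y) = c \<odot> br x y"
  using lie_alg_unfolded by (elim conjE) (blast | simp)
lemma br_self[simp]: "x \<in> C \<Longrightarrow> br x x = \<zero>"
  using lie_alg_unfolded by (elim conjE) (blast | simp)
lemma jacobi: "x \<in> C \<Longrightarrow> y \<in> C \<Longrightarrow> w \<in> C \<Longrightarrow>
   br x (br y w) \<oplus> br y (br w x) \<oplus> br w (br x y) = \<zero>"
  using lie_alg_unfolded by (elim conjE) (blast | simp)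

lemma add_left_commute: "x \<in> C \<Longrightarrow> y \<in> C \<Longrightarrow> w \<in> C \<Longrightarrow> x \<oplus> (y \<oplus> w) = y \<oplus> (x \<oplus> w)"
  by (simp add: add_assoc[symmetric] add_comm[of x y])

lemmas add_ac = add_assoc add_comm add_left_commute

lemma add_zero_right[simp]: "x \<in> C \<Longrightarrow> x \<oplus> \<zero> = x" using add_comm[of x "\<zero>"] by simp
lemma add_neg_left[simp]: "x \<in> C \<Longrightarrow> \<ominus> x \<oplus> x = \<zero>" using add_comm[of "\<ominus> x" x] by simp

lemma add_neg_cancel_left[simp]: "x \<in> C \<Longrightarrow> y \<in> C \<Longrightarrow> x \<oplus> (\<ominus> x \<oplus> y) = y"
  by (simp add: add_assoc[symmetric])
lemma neg_add_cancel_left[simp]: "x \<in> C \<Longrightarrow> y \<in> C \<Longrightarrow> \<ominus> x \<oplus> (x \<oplus> y) = y"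
  by (simp add: add_assoc[symmetric])

lemma add_left_imp_eq: "x \<in> C \<Longrightarrow> y \<in> C \<Longrightarrow> w \<in> C \<Longrightarrow> x \<oplus> y = x \<oplus> w \<Longrightarrow> y = w"
proof -
  assume a: "x \<in> C" "y \<in> C" "w \<in> C" "x \<oplus> y = x \<oplus> w"
  have "y = \<ominus> x \<oplus> (x \<oplus> y)" using a(1-3) by simp
  also have "\<dots> = \<ominus> x \<oplus> (x \<oplus> w)" using a(4) by simp
  also have "\<dots> = w" using a(1-3) by simp
  finally show ?thesis .
qed

lemma add_left_cancel_iff[simp]: "x \<in> C \<Longrightarrow> y \<in> C \<Longrightarrow> w \<in> C \<Longrightarrow> (x \<oplus> y = x \<oplus> w) = (y = w)"
  using add_left_imp_eq by blast

lemma eq_if_add_neg_eq_zero: "x \<in> C \<Longrightarrow> y \<in> C \<Longrightarrow> x \<oplus> \<ominus> y = \<zero> \<Longrightarrow> x = y"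
proof -
  assume a: "x \<in> C" "y \<in> C" "x \<oplus> \<ominus> y = \<zero>"
  have "x = x \<oplus> (\<ominus> y \<oplus> y)" using a(1-2) by simp
  also have "\<dots> = x \<oplus> \<ominus> y \<oplus> y" using a(1-2) by (simp add: add_assoc)
  also have "\<dots> = y" using a by simp
  finally show ?thesis .
qed

lemma neg_unique: "x \<in> C \<Longrightarrow> y \<in> C \<Longrightarrow> x \<oplus> y = \<zero> \<Longrightarrow> \<ominus> x = y"
proof -
  assume a: "x \<in> C" "y \<in> C" "x \<oplus> y = \<zero>"
  have "\<ominus> x = \<ominus> x \<oplus> \<zero>" using a(1) by simp
  also have "\<dots> = \<ominus> x \<oplus> (x \<oplus> y)" using a(3) by simp
  also have "\<dots> = y" using a(1-2) by simp
  finally show ?thesis .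
qed

lemma neg_neg[simp]: "x \<in> C \<Longrightarrow> \<ominus> (\<ominus> x) = x"
  by (rule neg_unique) simp_all

lemma neg_zero[simp]: "\<ominus> \<zero> = \<zero>"
  by (rule neg_unique) simp_all

lemma neg_add_distrib: "x \<in> C \<Longrightarrow> y \<in> C \<Longrightarrow> \<ominus> (x \<oplus> y) = \<ominus> x \<oplus> \<ominus> y"
proof (rule neg_unique)
  assume a: "x \<in> C" "y \<in> C"
  have "x \<oplus> y \<oplus> (\<ominus> x \<oplus> \<ominus> y) = x \<oplus> (\<ominus> x \<oplus> (y \<oplus> \<ominus> y))"
    using a by (simp only: add_assoc add_left_commute[of y] add_closed neg_closed)
  then show "x \<oplus> y \<oplus> (\<ominus> x \<oplus> \<ominus> y) = \<zero>" using a by simp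
qed simp_all

lemma add_eq_self_imp_zero: "x \<in> C \<Longrightarrow> y \<in> C \<Longrightarrow> x \<oplus> y = x \<Longrightarrow> y = \<zero>"
  using add_left_imp_eq[of x y "\<zero>"] by simp

lemma smul_zero_right[simp]: "c \<odot> \<zero> = \<zero>"
proof -
  have "c \<odot> \<zero> \<oplus> c \<odot> \<zero> = c \<odot> \<zero>" using smul_add_right[of "\<zero>" "\<zero>" c] by simp
  then show ?thesis using add_eq_self_imp_zero[of "c \<odot> \<zero>" "c \<odot> \<zero>"] by simp
qed

lemma smul_zero_left[simp]: "x \<in> C \<Longrightarrow> 0 \<odot> x = \<zero>"
proof -
  assume a: "x \<in> C"
  have "0 \<odot> x \<oplus> 0 \<odot> x = 0 \<odot> x" using smul_add_left[of x 0 0] a by simp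
  then show ?thesis using add_eq_self_imp_zero[of "0 \<odot> x" "0 \<odot> x"] a by simp
qed

lemma smul_uminus: "x \<in> C \<Longrightarrow> (- c) \<odot> x = \<ominus> (c \<odot> x)"
proof -
  assume a: "x \<in> C"
  have "c \<odot> x \<oplus> (-c) \<odot> x = \<zero>" using smul_add_left[of x c "-c"] a by simp
  then show ?thesis using neg_unique[of "c \<odot> x" "(-c) \<odot> x"] a by simp
qed

lemma br_zero_left[simp]: "x \<in> C \<Longrightarrow> br \<zero> x = \<zero>"
proof -
  assume a: "x \<in> C"
  have "br \<zero> x \<oplus> br \<zero> x = br \<zero> x" using br_add_left[of "\<zero>" "\<zero>" x] a by simp
  then show ?thesis using add_eq_self_imp_zero[of "br \<zero> x" "br \<zero> x"] a by simp
qed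
lemma br_zero_right[simp]: "x \<in> C \<Longrightarrow> br x \<zero> = \<zero>"
proof -
  assume a: "x \<in> C"
  have "br x \<zero> \<oplus> br x \<zero> = br x \<zero>" using br_add_right[of x "\<zero>" "\<zero>"] a by simp
  then show ?thesis using add_eq_self_imp_zero[of "br x \<zero>" "br x \<zero>"] a by simp
qed

lemma br_neg_left: "x \<in> C \<Longrightarrow> y \<in> C \<Longrightarrow> br (\<ominus> x) y = \<ominus> br x y"
proof -
  assume a: "x \<in> C" "y \<in> C"
  have "br x y \<oplus> br (\<ominus> x) y = \<zero>" using br_add_left[of x "\<ominus> x" y] a by simp
  then show ?thesis using neg_unique[of "br x y" "br (\<ominus> x) y"] a by simp
qed
lemma br_neg_right: "x \<in> C \<Longrightarrow> y \<in> C \<Longrightarrow> br x (\<ominus> y) = \<ominus> br x y"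
proof -
  assume a: "x \<in> C" "y \<in> C"
  have "br x y \<oplus> br x (\<ominus> y) = \<zero>" using br_add_right[of x y "\<ominus> y"] a by simp
  then show ?thesis using neg_unique[of "br x y" "br x (\<ominus> y)"] a by simp
qed

lemma br_antisym: "x \<in> C \<Longrightarrow> y \<in> C \<Longrightarrow> br y x = \<ominus> br x y"
proof -
  assume a: "x \<in> C" "y \<in> C"
  have "br x y \<oplus> br y x = br x x \<oplus> br x y \<oplus> (br y x \<oplus> br y y)" using a by simp
  also have "\<dots> = br (x \<oplus> y) (x \<oplus> y)" using a by (simp only: br_add_left br_add_right add_closed br_closed add_ac)
  also have "\<dots> = \<zero>" using a by simp
  finally have "br x y \<oplus> br y x = \<zero>" .
  then show ?thesis using a neg_unique[of "br x y" "br y x"] by simp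
qed

lemma jacobi_br_br: assumes "v \<in> C" "w \<in> C" "u \<in> C"
  shows "br (br v u) w \<oplus> \<ominus> br (br w u) v = br (br v w) u"
proof -
  have j: "br v (br u w) \<oplus> br u (br w v) \<oplus> br w (br v u) = \<zero>"
    using jacobi[of v u w] assms by simp
  have a1: "br (br v u) w = \<ominus> br w (br v u)" using br_antisym[of w "br v u"] assms by simp
  have a2: "\<ominus> br (br w u) v = br v (br w u)" using br_antisym[of v "br w u"] assms by simp
  have a3: "br v (br w u) = \<ominus> br v (br u w)" using br_antisym[of u w] br_neg_right[of v "br u w"] assms by simp
  have a4: "br (br v w) u = \<ominus> br u (br v w)" using br_antisym[of u "br v w"] assms by simp
  have a5: "br u (br v w) = \<ominus> br u (br w v)" using br_antisym[of v w] br_neg_right[of u "br w v"] assms by simp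
  have h1: "br u (br w v) = \<ominus> (br v (br u w) \<oplus> br w (br v u))"
    using j assms neg_unique[of "br v (br u w) \<oplus> br w (br v u)" "br u (br w v)"]
    by (simp add: add_ac)
  have h2: "br (br v w) u = br u (br w v)" using a4 a5 assms by simp
  have "br (br v u) w \<oplus> \<ominus> br (br w u) v = \<ominus> br w (br v u) \<oplus> \<ominus> br v (br u w)"
    using a1 a2 a3 by simp
  also have "\<dots> = \<ominus> (br v (br u w) \<oplus> br w (br v u))" using assms by (simp add: neg_add_distrib add_comm)
  also have "\<dots> = br (br v w) u" using h1 h2 by simp
  finally show ?thesis .
qed

lemma neg_eq_smul: "x \<in> C \<Longrightarrow> \<ominus> x = (-1) \<odot> x"
  using smul_uminus[of x 1] by simp


lemma lsum_closed:
  assumes "\<zero> \<in> X" "\<And>x y. x \<in> X \<Longrightarrow> y \<in> X \<Longrightarrow> x \<oplus> y \<in> X" "set xs \<subseteq> X"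
  shows "lsum A xs \<in> X"
  using assms(3) by (induction xs) (auto intro: assms(1,2))

lemma lsum_in_carrier[simp]: "set xs \<subseteq> C \<Longrightarrow> lsum A xs \<in> C"
  by (rule lsum_closed) auto

lemma lsum_append: "set xs \<subseteq> C \<Longrightarrow> set ys \<subseteq> C \<Longrightarrow> lsum A (xs @ ys) = lsum A xs \<oplus> lsum A ys"
  by (induction xs) (auto simp: add_assoc)

lemma lsum_map_add:
  assumes "\<And>x. x \<in> set L \<Longrightarrow> f x \<in> C" "\<And>x. x \<in> set L \<Longrightarrow> g x \<in> C"
  shows "lsum A (map (\<lambda>x. f x \<oplus> g x) L) = lsum A (map f L) \<oplus> lsum A (map g L)"
  using assms
proof (induction L)
  case Nil then show ?case by simp
next
  case (Cons a L)
  have fC: "set (map f L) \<subseteq> C" "set (map g L) \<subseteq> C" using Cons.prems by auto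
  have "lsum A (map (\<lambda>x. f x \<oplus> g x) (a # L)) = f a \<oplus> g a \<oplus> (lsum A (map f L) \<oplus> lsum A (map g L))"
    using Cons by simp
  also have "\<dots> = f a \<oplus> lsum A (map f L) \<oplus> (g a \<oplus> lsum A (map g L))"
    using Cons.prems fC by (simp add: add_ac)
  finally show ?case by simp
qed

lemma lsum_map_smul:
  assumes "\<And>x. x \<in> set L \<Longrightarrow> f x \<in> C"
  shows "lsum A (map (\<lambda>x. c \<odot> f x) L) = c \<odot> lsum A (map f L)"
  using assms
proof (induction L)
  case (Cons a L)
  have "set (map f L) \<subseteq> C" "f a \<in> C" using Cons.prems by auto
  then show ?case using Cons by (simp add: smul_add_right)
qed simp

lemma lsum_map_zero:
  assumes "\<And>x. x \<in> set L \<Longrightarrow> f x = \<zero>"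
  shows "lsum A (map f L) = \<zero>"
  using assms by (induction L) auto

lemma lsum_map_perm:
  assumes "distinct xs" "distinct ys" "set xs = set ys" "\<And>x. x \<in> set ys \<Longrightarrow> f x \<in> C"
  shows "lsum A (map f xs) = lsum A (map f ys)"
  using assms
proof (induction xs arbitrary: ys)
  case Nil then show ?case by simp
next
  case (Cons a xs)
  have "a \<in> set ys" using Cons.prems by auto
  then obtain ys1 ys2 where ys: "ys = ys1 @ a # ys2" by (meson split_list)
  have d: "distinct (ys1 @ ys2)" using Cons.prems ys by auto
  have "set xs = set (a#xs) - {a}" using Cons.prems(1) by auto
  also have "\<dots> = set ys - {a}" using Cons.prems(3) by simp
  also have "\<dots> = set (ys1 @ ys2)" using ys Cons.prems(2) by auto
  finally have s: "set xs = set (ys1 @ ys2)" .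
  have fC: "\<And>x. x \<in> set (ys1 @ ys2) \<Longrightarrow> f x \<in> C" using Cons.prems ys by auto
  have IH: "lsum A (map f xs) = lsum A (map f (ys1 @ ys2))"
    using Cons.IH[OF _ d s fC] Cons.prems by auto
  have c1: "set (map f ys1) \<subseteq> C" "set (map f ys2) \<subseteq> C" "f a \<in> C" using fC Cons.prems ys by auto
  have "lsum A (map f ys) = lsum A (map f ys1) \<oplus> (f a \<oplus> lsum A (map f ys2))"
    using c1 ys by (simp add: lsum_append)
  also have "\<dots> = f a \<oplus> (lsum A (map f ys1) \<oplus> lsum A (map f ys2))"
    using c1 by (simp add: add_ac)
  also have "\<dots> = f a \<oplus> lsum A (map f (ys1 @ ys2))"
    using c1 by (simp add: lsum_append)
  finally show ?case using IH by simp
qed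

lemma lsum_map_extend_zero:
  assumes "distinct xs" "distinct ys" "set xs \<subseteq> set ys" "\<And>x. x \<in> set ys \<Longrightarrow> f x \<in> C"
    "\<And>x. x \<in> set ys \<Longrightarrow> x \<notin> set xs \<Longrightarrow> f x = \<zero>"
  shows "lsum A (map f xs) = lsum A (map f ys)"
proof -
  let ?ys' = "xs @ filter (\<lambda>y. y \<notin> set xs) ys"
  have "lsum A (map f ys) = lsum A (map f ?ys')"
    by (rule lsum_map_perm) (use assms in auto)
  also have "\<dots> = lsum A (map f xs) \<oplus> lsum A (map f (filter (\<lambda>y. y \<notin> set xs) ys))"
    using assms by (subst map_append, subst lsum_append) auto
  also have "lsum A (map f (filter (\<lambda>y. y \<notin> set xs) ys)) = \<zero>"
    by (rule lsum_map_zero) (use assms in auto)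
  moreover have "set (map f xs) \<subseteq> C" using assms(3,4) by auto
  ultimately show ?thesis by simp
qed

lemma lsum_map_extend_zero_cong:
  assumes "distinct xs" "distinct ys" "set xs \<subseteq> set ys" "\<And>x. x \<in> set ys \<Longrightarrow> f x \<in> C"
    "\<And>x. x \<in> set ys \<Longrightarrow> x \<notin> set xs \<Longrightarrow> f x = \<zero>" "\<And>x. x \<in> set xs \<Longrightarrow> g x = f x"
  shows "lsum A (map g xs) = lsum A (map f ys)"
proof -
  have m: "map g xs = map f xs" using assms(6) by (induction xs) auto
  show ?thesis unfolding m by (rule lsum_map_extend_zero) (use assms in auto)
qed

lemma lspan_subset_carrier: "X \<subseteq> C \<Longrightarrow> lspan A X \<subseteq> C"
proof
  fix x assume X: "X \<subseteq> C" and "x \<in> lspan A X"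
  from this(2) show "x \<in> C" by (induction rule: lspan.induct) (use X in auto)
qed

lemma lspan_zero_singleton: "lspan A {\<zero>} = {\<zero>}"
proof
  show "lspan A {\<zero>} \<subseteq> {\<zero>}"
  proof
    fix x assume "x \<in> lspan A {\<zero>}"
    then show "x \<in> {\<zero>}" by (induction rule: lspan.induct) auto
  qed
qed (auto intro: lspan_zero)

lemma br_lspan_lspan_eq_zero:
  assumes "X \<subseteq> C" "Y \<subseteq> C" "\<And>x y. x \<in> X \<Longrightarrow> y \<in> Y \<Longrightarrow> br x y = \<zero>"
    and "u \<in> lspan A X" "w \<in> lspan A Y"
  shows "br u w = \<zero>"
proof -
  have XC: "lspan A X \<subseteq> C" and YC: "lspan A Y \<subseteq> C"
    using assms(1,2) by (auto dest: lspan_subset_carrier)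
  have xw: "br x w = \<zero>" if "x \<in> X" for x
    using \<open>w \<in> lspan A Y\<close>
  proof (induction rule: lspan.induct)
    case (lspan_add y y')
    then show ?case using that assms(1) YC br_add_right[of x y y'] by auto
  next
    case (lspan_smul y c)
    then show ?case using that assms(1) YC br_smul_right[of x y c] by auto
  qed (use that assms in auto)
  from \<open>u \<in> lspan A X\<close> show ?thesis
  proof (induction rule: lspan.induct)
    case (lspan_add x x')
    then show ?case using \<open>w \<in> lspan A Y\<close> XC YC br_add_left[of x x' w] by auto
  next
    case (lspan_smul x c)
    then show ?case using \<open>w \<in> lspan A Y\<close> XC YC br_smul_left[of x w c] by auto
  qed (use xw \<open>w \<in> lspan A Y\<close> YC in auto)
qed

lemma subalgebra_carrier: "subalgebra A C"
  by (simp add: subalgebra_def)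

lemma carrier_is_ideal: "is_ideal A C"
  by (simp add: is_ideal_def)

lemma is_ideal_ideal_gen:
  assumes "X \<subseteq> C" shows "is_ideal A (ideal_gen A X)" "X \<subseteq> ideal_gen A X"
proof -
  have "C \<in> {J. is_ideal A J \<and> X \<subseteq> J}" using assms carrier_is_ideal by simp
  then show "is_ideal A (ideal_gen A X)"
    unfolding is_ideal_def ideal_gen_def by (intro conjI) (auto simp: is_ideal_def)
  show "X \<subseteq> ideal_gen A X" unfolding ideal_gen_def by blast
qed

lemma nilpotent_ideal_if_abelian:
  assumes "is_ideal A I" "\<And>u w. u \<in> I \<Longrightarrow> w \<in> I \<Longrightarrow> br u w = \<zero>"
  shows "nilpotent_ideal A I"
proof -
  have "\<zero> \<in> I" using assms(1) by (simp add: is_ideal_def)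
  then have "{br u w | u w. u \<in> lcs A I 0 \<and> w \<in> I} = {\<zero>}"
    using assms(2) by force
  then have "lcs A I (Suc 0) = {\<zero>}" by (simp add: lspan_zero_singleton)
  then show ?thesis using assms(1) unfolding nilpotent_ideal_def by blast
qed

lemma nilpotent_ideal_subset_Fit: "nilpotent_ideal A I \<Longrightarrow> I \<subseteq> F"
proof -
  have "\<Union>{I. nilpotent_ideal A I} \<subseteq> C" by (auto simp: nilpotent_ideal_def is_ideal_def)
  then show "nilpotent_ideal A I \<Longrightarrow> I \<subseteq> F"
    unfolding Fit_def using is_ideal_ideal_gen(2) by blast
qed

lemma Fit_is_ideal: "is_ideal A F"
  unfolding Fit_def by (rule is_ideal_ideal_gen(1)) (auto simp: nilpotent_ideal_def is_ideal_def)

lemma Fit_in_carrier[simp]: "x \<in> F \<Longrightarrow> x \<in> C" using Fit_is_ideal by (auto simp: is_ideal_def)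
lemma Fit_zero[simp]: "\<zero> \<in> F" using Fit_is_ideal by (auto simp: is_ideal_def)
lemma Fit_add[simp]: "x \<in> F \<Longrightarrow> y \<in> F \<Longrightarrow> x \<oplus> y \<in> F" using Fit_is_ideal by (auto simp: is_ideal_def)
lemma Fit_smul[simp]: "x \<in> F \<Longrightarrow> c \<odot> x \<in> F" using Fit_is_ideal by (auto simp: is_ideal_def)
lemma Fit_neg[simp]: "x \<in> F \<Longrightarrow> \<ominus> x \<in> F"
  using Fit_smul[of x "-1"] smul_uminus[of x 1] by simp
lemma Fit_br_left[simp]: "x \<in> F \<Longrightarrow> a \<in> C \<Longrightarrow> br x a \<in> F" using Fit_is_ideal by (auto simp: is_ideal_def)
lemma derived_subset_carrier: "derived A \<subseteq> C"
  unfolding derived_def by (rule lspan_subset_carrier) auto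

lemma is_ideal_derived: "is_ideal A (derived A)"
  unfolding is_ideal_def
proof (intro conjI ballI allI)
  fix u a assume "u \<in> derived A" "a \<in> C"
  then have "u \<in> C" using derived_subset_carrier by auto
  then show "br u a \<in> derived A" "br a u \<in> derived A"
    using \<open>a \<in> C\<close> unfolding derived_def by (auto intro: lspan_gen)
qed (use derived_subset_carrier in \<open>auto simp: derived_def intro: lspan.intros\<close>)

end

locale metabelian_lie_algebra = lie_algebra +
  assumes metabelian_A: "metabelian A"
begin

lemma derived_abelian: "u \<in> derived A \<Longrightarrow> w \<in> derived A \<Longrightarrow> br u w = \<zero>"
  unfolding derived_def
  by (rule br_lspan_lspan_eq_zero) (use metabelian_A in \<open>auto simp: metabelian_def\<close>)

lemma derived_subset_Fit: "derived A \<subseteq> F"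
  using nilpotent_ideal_subset_Fit nilpotent_ideal_if_abelian is_ideal_derived derived_abelian
  by blast

lemma br_in_Fit[simp]: "x \<in> C \<Longrightarrow> y \<in> C \<Longrightarrow> br x y \<in> F"
  using derived_subset_Fit unfolding derived_def by (auto intro: lspan_gen)

end

section \<open>Polynomials and the ideal \<open>Delta\<close>\<close>

lemma update_eq_add_single: "a \<notin> Poly_Mapping.keys f \<Longrightarrow> Poly_Mapping.update a b f = f + Poly_Mapping.single a b"
  by (rule poly_mapping_eqI)
     (auto simp: lookup_update lookup_add lookup_single in_keys_iff when_def)

lemma poly_mapping_induct[case_names zero single add]:
  assumes "Q 0" "\<And>k v. Q (Poly_Mapping.single k v)" "\<And>f g. Q f \<Longrightarrow> Q g \<Longrightarrow> Q (f + g)"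
  shows "Q f"
proof (induction f rule: update_induct)
  case const then show ?case by (rule assms(1))
next
  case (update f a b)
  then show ?case using update_eq_add_single[of a f b] assms(2,3) by simp
qed

lemma count_list_replicate: "count_list (replicate k a) b = (if a = b then k else 0)"
  by (induction k) auto

lemma exists_list_with_counts: "\<exists>xs. \<forall>\<alpha>. count_list xs \<alpha> = Poly_Mapping.lookup m \<alpha>"
proof (induction m rule: poly_mapping_induct)
  case zero then show ?case by (rule_tac x="[]" in exI) simp
next
  case (single k v)
  show ?case by (rule_tac x="replicate v k" in exI) (simp add: count_list_replicate lookup_single when_def)
next
  case (add f g)
  then obtain xs ys where "\<forall>\<alpha>. count_list xs \<alpha> = Poly_Mapping.lookup f \<alpha>"
    "\<forall>\<alpha>. count_list ys \<alpha> = Poly_Mapping.lookup g \<alpha>" by blast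
  then show ?case by (rule_tac x="xs @ ys" in exI) (simp add: lookup_add)
qed

lemma poly_mapping_add_eq_0_iff: fixes m n :: "'i \<Rightarrow>\<^sub>0 nat" shows "m + n = 0 \<longleftrightarrow> m = 0 \<and> n = 0"
proof
  assume "m + n = 0"
  then have "\<forall>k. Poly_Mapping.lookup m k + Poly_Mapping.lookup n k = 0"
    by (metis lookup_add lookup_zero)
  then show "m = 0 \<and> n = 0" by (auto intro!: poly_mapping_eqI)
qed simp

lemma lookup_single_0: "Poly_Mapping.lookup (Poly_Mapping.single m c) 0 = (if m = 0 then c else 0)"
  by (simp add: lookup_single when_def)

lemma lookup_mult_0: "Poly_Mapping.lookup ((p::('i,'k::field) mpoly) * q) 0 = Poly_Mapping.lookup p 0 * Poly_Mapping.lookup q 0"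
proof (induction p rule: poly_mapping_induct)
  case zero then show ?case by simp
next
  case (single m c)
  show ?case
  proof (induction q rule: poly_mapping_induct)
    case zero then show ?case by simp
  next
    case (single n d)
    have "Poly_Mapping.single m c * Poly_Mapping.single n d = Poly_Mapping.single (m + n) (c * d)"
      by (rule mult_single)
    then show ?case by (simp only: lookup_single_0 poly_mapping_add_eq_0_iff) simp
  next
    case (add f g)
    have "Poly_Mapping.single m c * (f + g) = Poly_Mapping.single m c * f + Poly_Mapping.single m c * g"
      by (rule distrib_left)
    then show ?case using add by (simp add: lookup_add distrib_left)
  qed
next
  case (add f g)
  have "(f + g) * q = f * q + g * q" by (rule distrib_right)
  then show ?case using add by (simp add: lookup_add distrib_right)
qed

lemma Delta_imp_const_zero: "(p::('i,'k::field) mpoly) \<in> Delta \<Longrightarrow> Poly_Mapping.lookup p 0 = 0"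
proof (induction rule: Delta.induct)
  case (Delta_gen q \<alpha>)
  have ne: "Poly_Mapping.single \<alpha> (1::nat) \<noteq> 0"
    by (metis lookup_single_eq lookup_zero one_neq_zero)
  have "Poly_Mapping.lookup (Xvar \<alpha> :: ('i,'k) mpoly) 0 = 0"
    unfolding Xvar_def lookup_single_0 using ne by simp
  then show ?case by (simp add: lookup_mult_0)
qed (auto simp: lookup_add)


lemma diff_const_in_Delta: "(p::('i,'k::field) mpoly) - Poly_Mapping.single 0 (Poly_Mapping.lookup p 0) \<in> Delta"
proof (induction p rule: poly_mapping_induct)
  case zero then show ?case by (simp add: Delta_zero)
next
  case (single m c)
  show ?case
  proof (cases "m = 0")
    case True then show ?thesis by (simp add: Delta_zero)
  next
    case False
    then obtain \<alpha> where a: "Poly_Mapping.lookup m \<alpha> \<noteq> 0"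
      by (metis poly_mapping_eqI lookup_zero)
    define m' where "m' = m - Poly_Mapping.single \<alpha> 1"
    have "m = m' + Poly_Mapping.single \<alpha> 1"
      using a by (intro poly_mapping_eqI) (auto simp: m'_def lookup_add lookup_minus lookup_single when_def)
    then have "Poly_Mapping.single m c = Poly_Mapping.single m' c * Xvar \<alpha>"
      by (simp add: Xvar_def mult_single)
    moreover have "Poly_Mapping.lookup (Poly_Mapping.single m c) 0 = 0"
      using False by (simp add: lookup_single_0)
    ultimately show ?thesis by (simp add: Delta_gen)
  qed
next
  case (add f g)
  have e: "f + g - Poly_Mapping.single 0 (Poly_Mapping.lookup (f + g) 0) =
        (f - Poly_Mapping.single 0 (Poly_Mapping.lookup f 0)) + (g - Poly_Mapping.single 0 (Poly_Mapping.lookup g 0))"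
    by (simp add: lookup_add single_add)
  show ?case unfolding e by (rule Delta_add) (fact add)+
qed

lemma Delta_iff_const_zero: "((p::('i,'k::field) mpoly) \<in> Delta) = (Poly_Mapping.lookup p 0 = 0)"
proof
  assume "Poly_Mapping.lookup p 0 = 0"
  then show "p \<in> Delta" using diff_const_in_Delta[of p] by simp
qed (rule Delta_imp_const_zero)

lemma mult_notin_Delta: "p \<notin> Delta \<Longrightarrow> q \<notin> Delta \<Longrightarrow> (p::('i,'k::field) mpoly) * q \<notin> Delta"
  by (simp add: Delta_iff_const_zero lookup_mult_0)

lemma one_notin_Delta: "(1::('i,'k::field) mpoly) \<notin> Delta"
  by (simp add: Delta_iff_const_zero)

lemma nonzero_if_notin_Delta: "(p::('i,'k::field) mpoly) \<notin> Delta \<Longrightarrow> p \<noteq> 0"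
  using Delta_zero by blast

section \<open>U-algebras and the action of \<open>R\<close> on the Fitting radical\<close>

locale U_alg = metabelian_lie_algebra A for A :: "('k::field, 'a) lie_alg" +
  fixes z :: "'i \<Rightarrow> 'a"
  assumes U: "U_algebra A z"
begin

abbreviation "V \<equiv> lspan A (range z)"
abbreviation act (infixr "\<bullet>" 75) where "p \<bullet> b \<equiv> poly_act A z p b"
abbreviation "M \<equiv> mono_act A z"

lemma br_Fit_Fit[simp]: "x \<in> F \<Longrightarrow> y \<in> F \<Longrightarrow> br x y = \<zero>"
  using U by (simp add: U_algebra_def)

lemma Fit_torsion_free: "p \<noteq> 0 \<Longrightarrow> b \<in> F \<Longrightarrow> p \<bullet> b = \<zero> \<Longrightarrow> b = \<zero>"
  using U by (simp add: U_algebra_def)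

lemma basis_mod_Fit_A: "basis_mod_Fit A z" using U by (simp add: U_algebra_def)

lemma z_in_carrier[simp]: "z a \<in> C" using basis_mod_Fit_A by (simp add: basis_mod_Fit_def)

lemma span_in_carrier[simp]: "v \<in> V \<Longrightarrow> v \<in> C" using lspan_subset_carrier[of "range z"] by (auto simp: image_subset_iff)

lemma span_zero[simp]: "\<zero> \<in> V" by (rule lspan_zero)
lemma span_add[simp]: "v \<in> V \<Longrightarrow> w \<in> V \<Longrightarrow> v \<oplus> w \<in> V" by (rule lspan_add)
lemma span_smul[simp]: "v \<in> V \<Longrightarrow> c \<odot> v \<in> V" by (rule lspan_smul)
lemma span_neg[simp]: "v \<in> V \<Longrightarrow> \<ominus> v \<in> V"
  using span_smul[of v "-1"] smul_uminus[of v 1] by simp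

lemma carrier_decomp: "a \<in> C \<Longrightarrow> \<exists>v\<in>V. \<exists>f\<in>F. a = v \<oplus> f"
  using basis_mod_Fit_A by (simp add: basis_mod_Fit_def)

lemma span_as_lsum: "v \<in> V \<Longrightarrow> \<exists>xs c. distinct xs \<and> v = lsum A (map (\<lambda>\<alpha>. c \<alpha> \<odot> z \<alpha>) xs)"
proof (induction rule: lspan.induct)
  case lspan_zero
  then show ?case by (rule_tac x="[]" in exI) simp
next
  case (lspan_gen x)
  then obtain a where "x = z a" by auto
  then show ?case by (rule_tac x="[a]" in exI, rule_tac x="\<lambda>_. 1" in exI) simp
next
  case (lspan_add x y)
  then obtain xs c ys d where xs: "distinct xs" "x = lsum A (map (\<lambda>\<alpha>. c \<alpha> \<odot> z \<alpha>) xs)"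
    and ys: "distinct ys" "y = lsum A (map (\<lambda>\<alpha>. d \<alpha> \<odot> z \<alpha>) ys)" by blast
  define L where "L = remdups (xs @ ys)"
  define c' where "c' \<alpha> = (if \<alpha> \<in> set xs then c \<alpha> else 0)" for \<alpha>
  define d' where "d' \<alpha> = (if \<alpha> \<in> set ys then d \<alpha> else 0)" for \<alpha>
  have x: "x = lsum A (map (\<lambda>\<alpha>. c' \<alpha> \<odot> z \<alpha>) L)"
    unfolding xs(2) by (rule lsum_map_extend_zero_cong) (use xs(1) in \<open>auto simp: L_def c'_def\<close>)
  have y: "y = lsum A (map (\<lambda>\<alpha>. d' \<alpha> \<odot> z \<alpha>) L)"
    unfolding ys(2) by (rule lsum_map_extend_zero_cong) (use ys(1) in \<open>auto simp: L_def d'_def\<close>)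
  have "x \<oplus> y = lsum A (map (\<lambda>\<alpha>. c' \<alpha> \<odot> z \<alpha> \<oplus> d' \<alpha> \<odot> z \<alpha>) L)"
    unfolding x y by (rule lsum_map_add[symmetric]) auto
  also have "\<dots> = lsum A (map (\<lambda>\<alpha>. (c' \<alpha> + d' \<alpha>) \<odot> z \<alpha>) L)"
    by (simp add: smul_add_left)
  finally show ?case by (rule_tac x=L in exI, rule_tac x="\<lambda>\<alpha>. c' \<alpha> + d' \<alpha>" in exI) (simp add: L_def)
next
  case (lspan_smul x e)
  then obtain xs c where xs: "distinct xs" "x = lsum A (map (\<lambda>\<alpha>. c \<alpha> \<odot> z \<alpha>) xs)" by blast
  have "e \<odot> x = lsum A (map (\<lambda>\<alpha>. e \<odot> c \<alpha> \<odot> z \<alpha>) xs)"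
    unfolding xs(2) by (rule lsum_map_smul[symmetric]) auto
  also have "\<dots> = lsum A (map (\<lambda>\<alpha>. (e * c \<alpha>) \<odot> z \<alpha>) xs)" by (simp add: smul_smul)
  finally show ?case using xs(1) by (rule_tac x=xs in exI, rule_tac x="\<lambda>\<alpha>. e * c \<alpha>" in exI) simp
qed

lemma span_Fit_zero: assumes "v \<in> V" "v \<in> F" shows "v = \<zero>"
proof -
  obtain xs c where xs: "distinct xs" "v = lsum A (map (\<lambda>\<alpha>. c \<alpha> \<odot> z \<alpha>) xs)"
    using span_as_lsum[OF assms(1)] by blast
  have "\<forall>\<alpha>\<in>set xs. c \<alpha> = 0" using basis_mod_Fit_A xs assms(2) unfolding basis_mod_Fit_def by blast
  then have "lsum A (map (\<lambda>\<alpha>. c \<alpha> \<odot> z \<alpha>) xs) = \<zero>" by (intro lsum_map_zero) auto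
  then show ?thesis using xs by simp
qed

lemma decomp_unique:
  assumes "v \<in> V" "v' \<in> V" "f \<in> F" "f' \<in> F" "v \<oplus> f = v' \<oplus> f'"
  shows "v = v'" "f = f'"
proof -
  have C: "v \<in> C" "v' \<in> C" "f \<in> C" "f' \<in> C" using assms by auto
  have "v \<oplus> \<ominus> v' = v \<oplus> (f \<oplus> \<ominus> f) \<oplus> \<ominus> v'"
    using C by simp
  also have "\<dots> = v \<oplus> f \<oplus> (\<ominus> v' \<oplus> \<ominus> f)"
    using C by (simp only: add_ac neg_closed add_closed)
  also have "\<dots> = v' \<oplus> f' \<oplus> (\<ominus> v' \<oplus> \<ominus> f)" using assms(5) by simp
  also have "\<dots> = v' \<oplus> \<ominus> v' \<oplus> (f' \<oplus> \<ominus> f)" using C by (simp only: add_ac neg_closed add_closed)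
  also have "\<dots> = f' \<oplus> \<ominus> f" using C by simp
  finally have e: "v \<oplus> \<ominus> v' = f' \<oplus> \<ominus> f" .
  have "v \<oplus> \<ominus> v' \<in> V" using assms by simp
  moreover have "v \<oplus> \<ominus> v' \<in> F" unfolding e using assms by simp
  ultimately have "v \<oplus> \<ominus> v' = \<zero>" by (rule span_Fit_zero)
  then show "v = v'" using C eq_if_add_neg_eq_zero[of v v'] by simp
  then have "f' \<oplus> \<ominus> f = \<zero>" using e \<open>v \<oplus> \<ominus> v' = \<zero>\<close> by simp
  then show "f = f'" using C eq_if_add_neg_eq_zero[of f' f] by simp
qed

definition V_part :: "'a \<Rightarrow> 'a" where "V_part a = (SOME v. v \<in> V \<and> (\<exists>f\<in>F. a = v \<oplus> f))"
definition Fit_part :: "'a \<Rightarrow> 'a" where "Fit_part a = (SOME f. f \<in> F \<and> a = V_part a \<oplus> f)"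

lemma decomp_parts: assumes "a \<in> C" shows "V_part a \<in> V" "Fit_part a \<in> F" "a = V_part a \<oplus> Fit_part a"
proof -
  have "\<exists>v. v \<in> V \<and> (\<exists>f\<in>F. a = v \<oplus> f)" using carrier_decomp[OF assms] by blast
  then have v: "V_part a \<in> V \<and> (\<exists>f\<in>F. a = V_part a \<oplus> f)" unfolding V_part_def by (rule someI_ex)
  then have "\<exists>f. f \<in> F \<and> a = V_part a \<oplus> f" by blast
  then have "Fit_part a \<in> F \<and> a = V_part a \<oplus> Fit_part a" unfolding Fit_part_def by (rule someI_ex)
  then show "V_part a \<in> V" "Fit_part a \<in> F" "a = V_part a \<oplus> Fit_part a" using v by auto
qed

lemma decomp_parts_eq: assumes "v \<in> V" "f \<in> F" shows "V_part (v \<oplus> f) = v" "Fit_part (v \<oplus> f) = f"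
proof -
  have C: "v \<oplus> f \<in> C" using assms by simp
  note d = decomp_parts[OF C]
  show "V_part (v \<oplus> f) = v" by (rule decomp_unique(1)[OF d(1) assms(1) d(2) assms(2) d(3)[symmetric]])
  show "Fit_part (v \<oplus> f) = f" by (rule decomp_unique(2)[OF d(1) assms(1) d(2) assms(2) d(3)[symmetric]])
qed

lemma word_act_Cons[simp]: "word_act A z (a # xs) b = word_act A z xs (br b (z a))"
  by (simp add: word_act_def)
lemma word_act_Nil[simp]: "word_act A z [] b = b"
  by (simp add: word_act_def)
lemma word_act_append: "word_act A z (xs @ ys) b = word_act A z ys (word_act A z xs b)"
  by (simp add: word_act_def)

lemma word_act_Fit[simp]: "b \<in> F \<Longrightarrow> word_act A z xs b \<in> F"
  by (induction xs arbitrary: b) auto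

lemma word_act_add: "b \<in> C \<Longrightarrow> c \<in> C \<Longrightarrow> word_act A z xs (b \<oplus> c) = word_act A z xs b \<oplus> word_act A z xs c"
  by (induction xs arbitrary: b c) (auto simp: br_add_left)
lemma word_act_smul: "b \<in> C \<Longrightarrow> word_act A z xs (c \<odot> b) = c \<odot> word_act A z xs b"
  by (induction xs arbitrary: b) (auto simp: br_smul_left)
(* [b, [u, v]] = 0 since [u, v] lies in the abelian ideal Fit(A); this is what makes
   the action of R on Fit(A) commutative. *)
lemma br_Fit_br_commute: assumes "b \<in> F" "u \<in> C" "v \<in> C" shows "br (br b u) v = br (br b v) u"
proof -
  have C: "b \<in> C" using assms by simp
  have j: "br b (br u v) \<oplus> br u (br v b) \<oplus> br v (br b u) = \<zero>"
    using jacobi[of b u v] assms C by simp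
  have "br b (br u v) = \<zero>" using assms by simp
  moreover have "br u (br v b) = br (br b v) u"
    using assms C br_antisym[of v b] br_antisym[of u "br v b"] br_neg_left[of "br v b" u] by simp
  moreover have "br v (br b u) = \<ominus> br (br b u) v"
    using assms C br_antisym[of "br b u" v] by simp
  ultimately have "br (br b v) u \<oplus> \<ominus> br (br b u) v = \<zero>" using j assms C by simp
  then show ?thesis using eq_if_add_neg_eq_zero assms C by (metis br_closed)
qed

lemma word_act_br: "b \<in> F \<Longrightarrow> v \<in> C \<Longrightarrow> word_act A z xs (br b v) = br (word_act A z xs b) v"
proof (induction xs arbitrary: b)
  case Nil then show ?case by simp
next
  case (Cons a xs)
  have "word_act A z (a # xs) (br b v) = word_act A z xs (br (br b v) (z a))" by simp
  also have "\<dots> = word_act A z xs (br (br b (z a)) v)" using br_Fit_br_commute[of b v "z a"] Cons.prems by simp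
  also have "\<dots> = br (word_act A z xs (br b (z a))) v" using Cons by simp
  finally show ?case by simp
qed

lemma word_act_perm: "b \<in> F \<Longrightarrow> (\<forall>\<alpha>. count_list xs \<alpha> = count_list ys \<alpha>) \<Longrightarrow> word_act A z xs b = word_act A z ys b"
proof (induction xs arbitrary: ys b)
  case Nil
  then have "ys = []" by (metis count_list_0_iff list.set_intros(1) neq_Nil_conv count_list.simps(1))
  then show ?case by simp
next
  case (Cons x xs)
  have "count_list ys x \<noteq> 0" using Cons.prems(2)[rule_format, of x] by simp
  then have "x \<in> set ys" by (simp add: count_list_0_iff)
  then obtain ys1 ys2 where ys: "ys = ys1 @ x # ys2" by (meson split_list)
  have cnt: "\<forall>\<alpha>. count_list xs \<alpha> = count_list (ys1 @ ys2) \<alpha>"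
  proof
    fix \<alpha> show "count_list xs \<alpha> = count_list (ys1 @ ys2) \<alpha>"
      using Cons.prems(2)[rule_format, of \<alpha>] ys by (auto split: if_splits)
  qed
  have "word_act A z ys b = word_act A z ys2 (br (word_act A z ys1 b) (z x))"
    by (simp add: ys word_act_append)
  also have "\<dots> = word_act A z ys2 (word_act A z ys1 (br b (z x)))"
    using word_act_br[of b "z x" ys1] Cons.prems by simp
  also have "\<dots> = word_act A z (ys1 @ ys2) (br b (z x))" by (simp add: word_act_append)
  also have "\<dots> = word_act A z xs (br b (z x))" using Cons.IH[OF _ cnt] Cons.prems by simp
  finally show ?case by simp
qed


lemma mono_act_eq_word_act: assumes "b \<in> F" "\<forall>\<alpha>. count_list xs \<alpha> = Poly_Mapping.lookup m \<alpha>"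
  shows "M m b = word_act A z xs b"
proof -
  let ?ys = "SOME xs. \<forall>\<alpha>. count_list xs \<alpha> = Poly_Mapping.lookup m \<alpha>"
  have "\<forall>\<alpha>. count_list ?ys \<alpha> = Poly_Mapping.lookup m \<alpha>"
    using someI_ex[OF exists_list_with_counts[of m]] .
  then have "word_act A z ?ys b = word_act A z xs b" using assms by (intro word_act_perm) auto
  then show ?thesis by (simp add: mono_act_def)
qed

lemma obtain_list_with_counts: obtains xs where "\<forall>\<alpha>. count_list xs \<alpha> = Poly_Mapping.lookup m \<alpha>"
  using exists_list_with_counts by blast

lemma mono_act_Fit[simp]: "b \<in> F \<Longrightarrow> M m b \<in> F"
  by (metis obtain_list_with_counts mono_act_eq_word_act word_act_Fit)

lemma mono_act_add_monomial: assumes "b \<in> F" shows "M (m + n) b = M m (M n b)"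
proof -
  obtain xs where xs: "\<forall>\<alpha>. count_list xs \<alpha> = Poly_Mapping.lookup m \<alpha>" by (rule obtain_list_with_counts)
  obtain ys where ys: "\<forall>\<alpha>. count_list ys \<alpha> = Poly_Mapping.lookup n \<alpha>" by (rule obtain_list_with_counts)
  have "\<forall>\<alpha>. count_list (ys @ xs) \<alpha> = Poly_Mapping.lookup (m + n) \<alpha>"
    using xs ys by (simp add: lookup_add)
  then have "M (m + n) b = word_act A z (ys @ xs) b"
    using assms by (intro mono_act_eq_word_act)
  then have "M (m + n) b = word_act A z xs (word_act A z ys b)"
    by (simp add: word_act_append)
  then show ?thesis using assms xs ys by (simp add: mono_act_eq_word_act)
qed

lemma mono_act_0: "b \<in> F \<Longrightarrow> M 0 b = b"
  using mono_act_eq_word_act[of b "[]" 0] by simp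

lemma mono_act_var: "b \<in> F \<Longrightarrow> M (Poly_Mapping.single a 1) b = br b (z a)"
  using mono_act_eq_word_act[of b "[a]" "Poly_Mapping.single a 1"] by (simp add: lookup_single when_def)

lemma mono_act_add: "b \<in> F \<Longrightarrow> c \<in> F \<Longrightarrow> M m (b \<oplus> c) = M m b \<oplus> M m c"
  by (metis obtain_list_with_counts mono_act_eq_word_act word_act_add Fit_add Fit_in_carrier)
lemma mono_act_smul: "b \<in> F \<Longrightarrow> M m (c \<odot> b) = c \<odot> M m b"
  by (metis obtain_list_with_counts mono_act_eq_word_act word_act_smul Fit_smul Fit_in_carrier)
lemma mono_act_br: "b \<in> F \<Longrightarrow> v \<in> C \<Longrightarrow> M m (br b v) = br (M m b) v"
  by (metis obtain_list_with_counts mono_act_eq_word_act word_act_br Fit_br_left)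

lemma act_as_lsum:
  assumes "b \<in> F" "distinct L" "Poly_Mapping.keys p \<subseteq> set L"
  shows "p \<bullet> b = lsum A (map (\<lambda>m. Poly_Mapping.lookup p m \<odot> M m b) L)"
proof -
  let ?L0 = "SOME xs. distinct xs \<and> set xs = Poly_Mapping.keys p"
  have "\<exists>xs. distinct xs \<and> set xs = Poly_Mapping.keys p"
    using finite_distinct_list[OF finite_keys[of p]] by blast
  then have L0: "distinct ?L0 \<and> set ?L0 = Poly_Mapping.keys p" by (rule someI_ex)
  have "p \<bullet> b = lsum A (map (\<lambda>m. Poly_Mapping.lookup p m \<odot> M m b) ?L0)"
    unfolding poly_act_def by (rule refl)
  also have "\<dots> = lsum A (map (\<lambda>m. Poly_Mapping.lookup p m \<odot> M m b) L)"
  proof (rule lsum_map_extend_zero)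
    show "distinct ?L0" "set ?L0 \<subseteq> set L" using L0 assms(3) by auto
    show "distinct L" by (rule assms(2))
    show "Poly_Mapping.lookup p x \<odot> M x b \<in> C" for x using assms(1) by simp
    show "Poly_Mapping.lookup p x \<odot> M x b = \<zero>" if "x \<notin> set ?L0" for x
    proof -
      have "Poly_Mapping.lookup p x = 0" using that L0 by (simp add: in_keys_iff)
      then show ?thesis using assms(1) by simp
    qed
  qed
  finally show ?thesis .
qed

lemma act_add_poly: assumes "b \<in> F" shows "(p + q) \<bullet> b = p \<bullet> b \<oplus> q \<bullet> b"
proof -
  have "finite (Poly_Mapping.keys p \<union> Poly_Mapping.keys q)" by simp
  from finite_distinct_list[OF this] obtain L where L: "set L = Poly_Mapping.keys p \<union> Poly_Mapping.keys q" "distinct L"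
    by (elim exE conjE)
  note L = L(2,1)
  have k: "Poly_Mapping.keys (p + q) \<subseteq> set L" "Poly_Mapping.keys p \<subseteq> set L" "Poly_Mapping.keys q \<subseteq> set L"
    using L(2) keys_add[of p q] by blast+
  have "(p + q) \<bullet> b = lsum A (map (\<lambda>m. Poly_Mapping.lookup (p + q) m \<odot> M m b) L)"
    by (rule act_as_lsum[OF assms L(1) k(1)])
  also have "\<dots> = lsum A (map (\<lambda>m. Poly_Mapping.lookup p m \<odot> M m b \<oplus> Poly_Mapping.lookup q m \<odot> M m b) L)"
    using assms by (simp add: lookup_add smul_add_left)
  also have "\<dots> = lsum A (map (\<lambda>m. Poly_Mapping.lookup p m \<odot> M m b) L) \<oplus> lsum A (map (\<lambda>m. Poly_Mapping.lookup q m \<odot> M m b) L)"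
    using assms by (intro lsum_map_add) auto
  also have "\<dots> = p \<bullet> b \<oplus> q \<bullet> b"
    by (simp only: act_as_lsum[OF assms L(1) k(2)] act_as_lsum[OF assms L(1) k(3)])
  finally show ?thesis .
qed

lemma act_single: assumes "b \<in> F" shows "Poly_Mapping.single m c \<bullet> b = c \<odot> M m b"
proof -
  have k: "Poly_Mapping.keys (Poly_Mapping.single m c) \<subseteq> set [m]" by simp
  have "Poly_Mapping.single m c \<bullet> b = lsum A (map (\<lambda>m'. Poly_Mapping.lookup (Poly_Mapping.single m c) m' \<odot> M m' b) [m])"
    by (rule act_as_lsum[OF assms _ k]) simp
  also have "\<dots> = c \<odot> M m b \<oplus> \<zero>" by simp
  also have "\<dots> = c \<odot> M m b" using assms by simp
  finally show ?thesis .
qed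

lemma act_zero_poly: assumes "b \<in> F" shows "0 \<bullet> b = \<zero>"
proof -
  have "0 \<bullet> b = Poly_Mapping.single 0 0 \<bullet> b" by simp
  also have "\<dots> = 0 \<odot> M 0 b" using assms by (rule act_single)
  also have "\<dots> = \<zero>" using assms by simp
  finally show ?thesis .
qed

lemma act_Fit[simp]: "b \<in> F \<Longrightarrow> p \<bullet> b \<in> F"
  by (induction p rule: poly_mapping_induct) (simp_all add: act_zero_poly act_single act_add_poly)

lemma act_add: "b \<in> F \<Longrightarrow> c \<in> F \<Longrightarrow> p \<bullet> (b \<oplus> c) = p \<bullet> b \<oplus> p \<bullet> c"
proof (induction p rule: poly_mapping_induct)
  case zero then show ?case by (simp add: act_zero_poly)
next
  case (single k v) then show ?case by (simp add: act_single mono_act_add smul_add_right)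
next
  case (add f g)
  have C: "f \<bullet> b \<in> C" "g \<bullet> b \<in> C" "f \<bullet> c \<in> C" "g \<bullet> c \<in> C" using add.prems by auto
  show ?case using add C by (simp add: act_add_poly add_ac)
qed

lemma act_smul: "b \<in> F \<Longrightarrow> p \<bullet> c \<odot> b = c \<odot> p \<bullet> b"
proof (induction p rule: poly_mapping_induct)
  case zero then show ?case by (simp add: act_zero_poly)
next
  case (single k v) then show ?case by (simp add: act_single mono_act_smul smul_smul[symmetric] mult.commute)
next
  case (add f g) then show ?case by (simp add: act_add_poly smul_add_right)
qed

lemma act_zero[simp]: "p \<bullet> \<zero> = \<zero>"
  using act_smul[of "\<zero>" p 0] by simp

lemma act_neg: "b \<in> F \<Longrightarrow> p \<bullet> \<ominus> b = \<ominus> (p \<bullet> b)"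
  using act_smul[of b p "-1"] smul_uminus[of b 1] smul_uminus[of "p \<bullet> b" 1] by simp

lemma act_br: "b \<in> F \<Longrightarrow> v \<in> C \<Longrightarrow> p \<bullet> br b v = br (p \<bullet> b) v"
proof (induction p rule: poly_mapping_induct)
  case zero then show ?case by (simp add: act_zero_poly)
next
  case (single k v) then show ?case by (simp add: act_single mono_act_br br_smul_left)
next
  case (add f g) then show ?case by (simp add: act_add_poly br_add_left)
qed

lemma act_single_mult:
  assumes "b \<in> F"
  shows "(Poly_Mapping.single m c * q) \<bullet> b = Poly_Mapping.single m c \<bullet> q \<bullet> b"
proof (induction q rule: poly_mapping_induct)
  case zero
  then show ?case using assms by (simp add: act_zero_poly)
next
  case (single n d)
  have "(Poly_Mapping.single m c * Poly_Mapping.single n d) \<bullet> b = (c * d) \<odot> M (m + n) b"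
    using assms by (simp add: mult_single act_single)
  also have "\<dots> = c \<odot> M m (d \<odot> M n b)"
    using assms by (simp add: mono_act_add_monomial smul_smul mono_act_smul)
  also have "\<dots> = Poly_Mapping.single m c \<bullet> Poly_Mapping.single n d \<bullet> b"
    using assms by (simp add: act_single)
  finally show ?case .
next
  case (add f g)
  then show ?case using assms by (simp add: distrib_left act_add_poly act_add)
qed

lemma act_mult: "b \<in> F \<Longrightarrow> (p * q) \<bullet> b = p \<bullet> q \<bullet> b"
  by (induction p rule: poly_mapping_induct)
    (simp_all add: act_zero_poly act_single_mult distrib_right act_add_poly)

lemma act_one[simp]: "b \<in> F \<Longrightarrow> 1 \<bullet> b = b"
  using act_single[of b 0 1] mono_act_0[of b] by simp

lemma act_Xvar: "b \<in> F \<Longrightarrow> Xvar a \<bullet> b = br b (z a)"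
  by (simp add: Xvar_def act_single mono_act_var del: One_nat_def)

lemma act_commute: "b \<in> F \<Longrightarrow> p \<bullet> q \<bullet> b = q \<bullet> p \<bullet> b"
  by (metis act_mult mult.commute)

end

section \<open>The \<open>Delta\<close>-localisation\<close>

context U_alg
begin

abbreviation "T \<equiv> loc_triples A z"
abbreviation "cl \<equiv> loc_cls A z"
abbreviation "D \<equiv> loc_Delta A z"

lemma loc_triples_iff[simp]: "((v, m, s) \<in> T) = (v \<in> V \<and> m \<in> F \<and> s \<notin> Delta)"
  by (simp add: loc_triples_def)

lemma act_cancel: assumes "s \<noteq> 0" "x \<in> F" "y \<in> F" "s \<bullet> x = s \<bullet> y" shows "x = y"
proof -
  have "s \<bullet> (x \<oplus> \<ominus> y) = \<zero>" using assms by (simp add: act_add act_neg)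
  then have "x \<oplus> \<ominus> y = \<zero>" using Fit_torsion_free[OF assms(1)] assms by simp
  then show ?thesis using eq_if_add_neg_eq_zero assms by simp
qed

lemma act_cross_mult:
  assumes "m \<in> F" "n \<in> F" "r \<bullet> m = s \<bullet> n"
  shows "(s * s') \<bullet> r' \<bullet> n = (r * r') \<bullet> s' \<bullet> m"
proof -
  have "(s * s') \<bullet> r' \<bullet> n = r' \<bullet> (s' * s) \<bullet> n"
    using act_commute[OF assms(2), of "s * s'" r'] by (simp add: mult.commute)
  also have "\<dots> = r' \<bullet> s' \<bullet> r \<bullet> m" using assms by (simp add: act_mult)
  also have "\<dots> = r' \<bullet> r \<bullet> s' \<bullet> m" using act_commute[OF assms(1), of s' r] by simp
  also have "\<dots> = (r * r') \<bullet> s' \<bullet> m" using assms(1) by (simp add: act_mult act_commute)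
  finally show ?thesis .
qed

(* Torsion-freeness reduces equality of fractions to cross-multiplication. *)
lemma loc_rel_iff:
  assumes "(v, m, s) \<in> T" "(v', m', s') \<in> T"
  shows "loc_rel A z (v, m, s) (v', m', s') = (v = v' \<and> s' \<bullet> m = s \<bullet> m')"
proof -
  have F: "m \<in> F" "m' \<in> F" "s \<noteq> 0" "s' \<noteq> 0" using assms nonzero_if_notin_Delta by auto
  have "(\<exists>u. u \<notin> Delta \<and> u \<bullet> (s' \<bullet> m \<oplus> \<ominus> (s \<bullet> m')) = \<zero>) = (s' \<bullet> m = s \<bullet> m')"
  proof
    assume "\<exists>u. u \<notin> Delta \<and> u \<bullet> (s' \<bullet> m \<oplus> \<ominus> (s \<bullet> m')) = \<zero>"
    then obtain u where u: "u \<notin> Delta" "u \<bullet> (s' \<bullet> m \<oplus> \<ominus> (s \<bullet> m')) = \<zero>" by blast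
    then have "s' \<bullet> m \<oplus> \<ominus> (s \<bullet> m') = \<zero>" using Fit_torsion_free[OF nonzero_if_notin_Delta[OF u(1)]] F by simp
    then show "s' \<bullet> m = s \<bullet> m'" using eq_if_add_neg_eq_zero F by simp
  next
    assume "s' \<bullet> m = s \<bullet> m'"
    then have "1 \<bullet> (s' \<bullet> m \<oplus> \<ominus> (s \<bullet> m')) = \<zero>" using F by simp
    then show "\<exists>u. u \<notin> Delta \<and> u \<bullet> (s' \<bullet> m \<oplus> \<ominus> (s \<bullet> m')) = \<zero>" using one_notin_Delta by blast
  qed
  then show ?thesis by (simp add: loc_rel_def)
qed

lemma loc_rel_refl: "t \<in> T \<Longrightarrow> loc_rel A z t t"
  by (cases t) (auto simp: loc_rel_iff)

lemma loc_rel_sym: "t \<in> T \<Longrightarrow> t' \<in> T \<Longrightarrow> loc_rel A z t t' \<Longrightarrow> loc_rel A z t' t"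
  by (cases t, cases t') (auto simp: loc_rel_iff)

lemma loc_rel_trans: assumes "t \<in> T" "t' \<in> T" "t'' \<in> T" "loc_rel A z t t'" "loc_rel A z t' t''"
  shows "loc_rel A z t t''"
proof -
  obtain v m s where t: "t = (v, m, s)" by (cases t)
  obtain v' m' s' where t': "t' = (v', m', s')" by (cases t')
  obtain v'' m'' s'' where t'': "t'' = (v'', m'', s'')" by (cases t'')
  have F: "m \<in> F" "m' \<in> F" "m'' \<in> F" "s' \<noteq> 0" using assms t t' t'' nonzero_if_notin_Delta by auto
  have e1: "v = v'" "s' \<bullet> m = s \<bullet> m'" using assms(1,2,4) t t' by (auto simp: loc_rel_iff)
  have e2: "v' = v''" "s'' \<bullet> m' = s' \<bullet> m''" using assms(2,3,5) t' t'' by (auto simp: loc_rel_iff)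
  have "s' \<bullet> s'' \<bullet> m = s'' \<bullet> s' \<bullet> m" using F by (simp add: act_commute)
  also have "\<dots> = s'' \<bullet> s \<bullet> m'" using e1 by simp
  also have "\<dots> = s \<bullet> s'' \<bullet> m'" using F by (simp add: act_commute)
  also have "\<dots> = s \<bullet> s' \<bullet> m''" using e2 by simp
  also have "\<dots> = s' \<bullet> s \<bullet> m''" using F by (simp add: act_commute)
  finally have "s'' \<bullet> m = s \<bullet> m''" using act_cancel[OF F(4)] F by simp
  then show ?thesis using assms t t' t'' e1 e2 by (simp add: loc_rel_iff)
qed

lemma loc_cls_eq_iff_rel: assumes "t \<in> T" "t' \<in> T" shows "(cl t = cl t') = loc_rel A z t t'"
proof
  assume e: "cl t = cl t'"
  have "t' \<in> cl t'" using assms loc_rel_refl by (simp add: loc_cls_def)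
  then have "t' \<in> cl t" using e by simp
  then show "loc_rel A z t t'" by (simp add: loc_cls_def)
next
  assume r: "loc_rel A z t t'"
  show "cl t = cl t'"
    unfolding loc_cls_def using r loc_rel_sym loc_rel_trans assms by blast
qed

lemma loc_cls_eq_iff:
  assumes "(v, m, s) \<in> T" "(v', m', s') \<in> T"
  shows "(cl (v, m, s) = cl (v', m', s')) = (v = v' \<and> s' \<bullet> m = s \<bullet> m')"
  using loc_cls_eq_iff_rel[OF assms] loc_rel_iff[OF assms] by simp

lemma loc_cls_eqI:
  assumes "(v, m, s) \<in> T" "(v, m', s') \<in> T" "s' \<bullet> m = s \<bullet> m'"
  shows "cl (v, m, s) = cl (v, m', s')"
  using loc_cls_eq_iff[OF assms(1,2)] assms(3) by simp

lemma loc_rep_in_class: assumes "t \<in> T"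
  obtains t' where "loc_rep (cl t) = t'" "t' \<in> T" "loc_rel A z t t'"
proof -
  have "t \<in> cl t" using assms loc_rel_refl by (simp add: loc_cls_def)
  then have "loc_rep (cl t) \<in> cl t" unfolding loc_rep_def by (rule someI)
  then show ?thesis using that by (simp add: loc_cls_def)
qed

(* The operations of loc_Delta are computed on the representative picked by loc_rep. *)
lemma loc_rep_cls: assumes "(v, m, s) \<in> T"
  obtains n r where "loc_rep (cl (v, m, s)) = (v, n, r)" "(v, n, r) \<in> T" "r \<bullet> m = s \<bullet> n"
proof -
  obtain t' where t': "loc_rep (cl (v, m, s)) = t'" "t' \<in> T" "loc_rel A z (v, m, s) t'"
    using loc_rep_in_class[OF assms] by blast
  obtain v1 n r where "t' = (v1, n, r)" by (cases t')
  then show ?thesis using t' that assms by (auto simp: loc_rel_iff)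
qed

lemma loc_carrier: "la_carrier D = cl ` T"
  by (simp add: loc_Delta_def Let_def)
lemma loc_zero: "la_zero D = cl (\<zero>, \<zero>, 1)"
  by (simp add: loc_Delta_def Let_def)

lemma loc_add:
  assumes a: "(v, m, s) \<in> T" "(v', m', s') \<in> T"
  shows "la_add D (cl (v, m, s)) (cl (v', m', s')) = cl (v \<oplus> v', s' \<bullet> m \<oplus> s \<bullet> m', s * s')"
proof -
  obtain n r where r: "loc_rep (cl (v, m, s)) = (v, n, r)" "(v, n, r) \<in> T" "r \<bullet> m = s \<bullet> n"
    using loc_rep_cls[OF a(1)] by blast
  obtain n' r' where r': "loc_rep (cl (v', m', s')) = (v', n', r')" "(v', n', r') \<in> T" "r' \<bullet> m' = s' \<bullet> n'"
    using loc_rep_cls[OF a(2)] by blast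
  have F: "m \<in> F" "m' \<in> F" "n \<in> F" "n' \<in> F" "s \<notin> Delta" "s' \<notin> Delta" "r \<notin> Delta" "r' \<notin> Delta"
    using a r r' by auto
  have "la_add D (cl (v, m, s)) (cl (v', m', s')) = cl (v \<oplus> v', r' \<bullet> n \<oplus> r \<bullet> n', r * r')"
    using r r' by (simp add: loc_Delta_def Let_def)
  also have "\<dots> = cl (v \<oplus> v', s' \<bullet> m \<oplus> s \<bullet> m', s * s')"
  proof (rule loc_cls_eqI)
    show "(v \<oplus> v', r' \<bullet> n \<oplus> r \<bullet> n', r * r') \<in> T" "(v \<oplus> v', s' \<bullet> m \<oplus> s \<bullet> m', s * s') \<in> T"
      using a F by (auto simp: mult_notin_Delta)
    have "(s * s') \<bullet> r' \<bullet> n = (r * r') \<bullet> s' \<bullet> m"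
      using act_cross_mult[OF F(1,3) r(3)] .
    moreover have "(s * s') \<bullet> r \<bullet> n' = (r * r') \<bullet> s \<bullet> m'"
      using act_cross_mult[OF F(2,4) r'(3), of s r] by (simp add: mult.commute)
    ultimately
    show "(s * s') \<bullet> (r' \<bullet> n \<oplus> r \<bullet> n') = (r * r') \<bullet> (s' \<bullet> m \<oplus> s \<bullet> m')"
      using F by (simp add: act_add)
  qed
  finally show ?thesis .
qed

lemma loc_neg:
  assumes a: "(v, m, s) \<in> T"
  shows "la_neg D (cl (v, m, s)) = cl (\<ominus> v, \<ominus> m, s)"
proof -
  obtain n r where r: "loc_rep (cl (v, m, s)) = (v, n, r)" "(v, n, r) \<in> T" "r \<bullet> m = s \<bullet> n"
    using loc_rep_cls[OF a(1)] by blast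
  have F: "m \<in> F" "n \<in> F" using a r by auto
  have "la_neg D (cl (v, m, s)) = cl (\<ominus> v, \<ominus> n, r)"
    using r by (simp add: loc_Delta_def Let_def)
  also have "\<dots> = cl (\<ominus> v, \<ominus> m, s)"
    by (rule loc_cls_eqI) (use a r F in \<open>auto simp: act_neg\<close>)
  finally show ?thesis .
qed

lemma loc_smul:
  assumes a: "(v, m, s) \<in> T"
  shows "la_smul D c (cl (v, m, s)) = cl (c \<odot> v, c \<odot> m, s)"
proof -
  obtain n r where r: "loc_rep (cl (v, m, s)) = (v, n, r)" "(v, n, r) \<in> T" "r \<bullet> m = s \<bullet> n"
    using loc_rep_cls[OF a(1)] by blast
  have F: "m \<in> F" "n \<in> F" using a r by auto
  have "la_smul D c (cl (v, m, s)) = cl (c \<odot> v, c \<odot> n, r)"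
    using r by (simp add: loc_Delta_def Let_def)
  also have "\<dots> = cl (c \<odot> v, c \<odot> m, s)"
    by (rule loc_cls_eqI) (use a r F in \<open>auto simp: act_smul\<close>)
  finally show ?thesis .
qed

lemma loc_br:
  assumes a: "(v, m, s) \<in> T" "(v', m', s') \<in> T"
  shows "la_br D (cl (v, m, s)) (cl (v', m', s')) =
    cl (\<zero>, (s * s') \<bullet> br v v' \<oplus> s' \<bullet> br m v' \<oplus> \<ominus> (s \<bullet> br m' v), s * s')"
proof -
  obtain n r where r: "loc_rep (cl (v, m, s)) = (v, n, r)" "(v, n, r) \<in> T" "r \<bullet> m = s \<bullet> n"
    using loc_rep_cls[OF a(1)] by blast
  obtain n' r' where r': "loc_rep (cl (v', m', s')) = (v', n', r')" "(v', n', r') \<in> T" "r' \<bullet> m' = s' \<bullet> n'"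
    using loc_rep_cls[OF a(2)] by blast
  have F: "m \<in> F" "m' \<in> F" "n \<in> F" "n' \<in> F" "s \<notin> Delta" "s' \<notin> Delta" "r \<notin> Delta" "r' \<notin> Delta"
    "v \<in> V" "v' \<in> V" "v \<in> C" "v' \<in> C"
    using a r r' by auto
  have "la_br D (cl (v, m, s)) (cl (v', m', s')) =
    cl (\<zero>, (r * r') \<bullet> br v v' \<oplus> r' \<bullet> br n v' \<oplus> \<ominus> (r \<bullet> br n' v), r * r')"
    using r r' by (simp add: loc_Delta_def Let_def)
  also have "\<dots> = cl (\<zero>, (s * s') \<bullet> br v v' \<oplus> s' \<bullet> br m v' \<oplus> \<ominus> (s \<bullet> br m' v), s * s')"
  proof (rule loc_cls_eqI)
    show "(\<zero>, (r * r') \<bullet> br v v' \<oplus> r' \<bullet> br n v' \<oplus> \<ominus> (r \<bullet> br n' v), r * r') \<in> T"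
      "(\<zero>, (s * s') \<bullet> br v v' \<oplus> s' \<bullet> br m v' \<oplus> \<ominus> (s \<bullet> br m' v), s * s') \<in> T"
      using F by (auto simp: mult_notin_Delta)
    have "(s * s') \<bullet> (r * r') \<bullet> br v v' = (r * r') \<bullet> (s * s') \<bullet> br v v'"
      using F by (simp add: act_commute)
    moreover have "(s * s') \<bullet> r' \<bullet> br n v' = (r * r') \<bullet> s' \<bullet> br m v'"
      using r(3) F by (intro act_cross_mult) (simp_all add: act_br)
    moreover have "(s * s') \<bullet> r \<bullet> br n' v = (r * r') \<bullet> s \<bullet> br m' v"
      using r'(3) F act_cross_mult[of "br m' v" "br n' v" r' s' s r]
      by (simp add: act_br mult.commute)
    ultimately
    show "(s * s') \<bullet> ((r * r') \<bullet> br v v' \<oplus> r' \<bullet> br n v' \<oplus> \<ominus> (r \<bullet> br n' v)) =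
          (r * r') \<bullet> ((s * s') \<bullet> br v v' \<oplus> s' \<bullet> br m v' \<oplus> \<ominus> (s \<bullet> br m' v))"
      using F by (simp add: act_add act_neg)
  qed
  finally show ?thesis .
qed

definition embed :: "'a \<Rightarrow> ('i, 'k, 'a) ltriple set" where "embed a = cl (V_part a, Fit_part a, 1)"

lemma embed_add_decomp: assumes "v \<in> V" "f \<in> F" shows "embed (v \<oplus> f) = cl (v, f, 1)"
  using decomp_parts_eq[OF assms] by (simp add: embed_def)

lemma embed_triple: "a \<in> C \<Longrightarrow> (V_part a, Fit_part a, 1) \<in> T"
  using decomp_parts(1,2) one_notin_Delta by simp

lemma embed_in_loc: "a \<in> C \<Longrightarrow> embed a \<in> la_carrier D"
  using embed_triple by (simp add: embed_def loc_carrier)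

lemma embed_inj: assumes "a \<in> C" "b \<in> C" "embed a = embed b" shows "a = b"
proof -
  have "V_part a = V_part b \<and> 1 \<bullet> Fit_part a = 1 \<bullet> Fit_part b"
    using assms loc_cls_eq_iff[OF embed_triple[OF assms(1)] embed_triple[OF assms(2)]] by (simp add: embed_def)
  then have e: "V_part a = V_part b" "Fit_part a = Fit_part b" using decomp_parts(2)[OF assms(1)] decomp_parts(2)[OF assms(2)] by auto
  have "a = V_part a \<oplus> Fit_part a" using assms(1) by (rule decomp_parts(3))
  also have "\<dots> = V_part b \<oplus> Fit_part b" using e by simp
  also have "\<dots> = b" using assms(2) by (rule decomp_parts(3)[symmetric])
  finally show ?thesis .
qed

lemma embed_zero: "embed \<zero> = la_zero D"
  using embed_add_decomp[of "\<zero>" "\<zero>"] by (simp add: loc_zero)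

lemma embed_add: assumes "a \<in> C" "b \<in> C" shows "embed (a \<oplus> b) = la_add D (embed a) (embed b)"
proof -
  note da = decomp_parts[OF assms(1)] and db = decomp_parts[OF assms(2)]
  have C: "V_part a \<in> C" "Fit_part a \<in> C" "V_part b \<in> C" "Fit_part b \<in> C" using da(1,2) db(1,2) by auto
  have "a \<oplus> b = V_part a \<oplus> Fit_part a \<oplus> (V_part b \<oplus> Fit_part b)" using da(3) db(3) by (rule arg_cong2)
  also have "\<dots> = V_part a \<oplus> V_part b \<oplus> (Fit_part a \<oplus> Fit_part b)" using C by (simp only: add_ac add_closed)
  finally have "a \<oplus> b = V_part a \<oplus> V_part b \<oplus> (Fit_part a \<oplus> Fit_part b)" .
  then have "embed (a \<oplus> b) = cl (V_part a \<oplus> V_part b, Fit_part a \<oplus> Fit_part b, 1)"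
    using embed_add_decomp da(1,2) db(1,2) by simp
  also have "\<dots> = la_add D (embed a) (embed b)"
    using loc_add[OF embed_triple[OF assms(1)] embed_triple[OF assms(2)]] da(1,2) db(1,2) by (simp add: embed_def)
  finally show ?thesis .
qed

lemma embed_neg: assumes "a \<in> C" shows "embed (\<ominus> a) = la_neg D (embed a)"
proof -
  note da = decomp_parts[OF assms(1)]
  have C: "V_part a \<in> C" "Fit_part a \<in> C" using da(1,2) by auto
  have "\<ominus> a = \<ominus> (V_part a \<oplus> Fit_part a)" using da(3) by (rule arg_cong)
  also have "\<dots> = \<ominus> V_part a \<oplus> \<ominus> Fit_part a" using C by (rule neg_add_distrib)
  finally have "\<ominus> a = \<ominus> V_part a \<oplus> \<ominus> Fit_part a" .
  then have "embed (\<ominus> a) = cl (\<ominus> V_part a, \<ominus> Fit_part a, 1)"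
    using embed_add_decomp da(1,2) by simp
  also have "\<dots> = la_neg D (embed a)"
    using loc_neg[OF embed_triple[OF assms(1)]] by (simp add: embed_def)
  finally show ?thesis .
qed

lemma embed_smul: assumes "a \<in> C" shows "embed (c \<odot> a) = la_smul D c (embed a)"
proof -
  note da = decomp_parts[OF assms(1)]
  have C: "V_part a \<in> C" "Fit_part a \<in> C" using da(1,2) by auto
  have "c \<odot> a = c \<odot> (V_part a \<oplus> Fit_part a)" using da(3) by (rule arg_cong)
  also have "\<dots> = c \<odot> V_part a \<oplus> c \<odot> Fit_part a" using C by (rule smul_add_right)
  finally have "c \<odot> a = c \<odot> V_part a \<oplus> c \<odot> Fit_part a" .
  then have "embed (c \<odot> a) = cl (c \<odot> V_part a, c \<odot> Fit_part a, 1)"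
    using embed_add_decomp da(1,2) by simp
  also have "\<dots> = la_smul D c (embed a)"
    using loc_smul[OF embed_triple[OF assms(1)]] by (simp add: embed_def)
  finally show ?thesis .
qed

lemma embed_br: assumes "a \<in> C" "b \<in> C" shows "embed (br a b) = la_br D (embed a) (embed b)"
proof -
  note da = decomp_parts[OF assms(1)] and db = decomp_parts[OF assms(2)]
  let ?va = "V_part a" and ?fa = "Fit_part a" and ?vb = "V_part b" and ?fb = "Fit_part b"
  have C: "?va \<in> C" "?fa \<in> C" "?vb \<in> C" "?fb \<in> C" using da(1,2) db(1,2) by auto
  have "br a b = br (?va \<oplus> ?fa) (?vb \<oplus> ?fb)" using da(3) db(3) by (rule arg_cong2)
  also have "\<dots> = br ?va ?vb \<oplus> br ?va ?fb \<oplus> (br ?fa ?vb \<oplus> br ?fa ?fb)"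
    using C by (simp only: br_add_left br_add_right add_closed br_closed add_ac)
  also have "br ?fa ?fb = \<zero>" using da(2) db(2) by simp
  also have "br ?va ?fb = \<ominus> br ?fb ?va" using C br_antisym[of ?fb ?va] by simp
  finally have e: "br a b = br ?va ?vb \<oplus> br ?fa ?vb \<oplus> \<ominus> br ?fb ?va"
    using C by (simp add: add_ac)
  have "embed (br a b) = cl (\<zero>, br a b, 1)"
    using embed_add_decomp[of "\<zero>" "br a b"] assms by simp
  also have "\<dots> = la_br D (embed a) (embed b)"
    using loc_br[OF embed_triple[OF assms(1)] embed_triple[OF assms(2)]] da(1,2) db(1,2) e by (simp add: embed_def)
  finally show ?thesis .
qed

lemma embedding_on_embed: "embedding_on A D embed C"
  unfolding embedding_on_def
  by (intro conjI ballI allI)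
    (simp_all add: embed_zero embed_add embed_neg embed_smul embed_br embed_in_loc inj_on_def embed_inj)

end

section \<open>Finitely many elements of the localisation embed into \<open>A\<close>\<close>

context U_alg
begin

definition correction :: "('i, 'k) mpoly \<Rightarrow> ('a \<Rightarrow> 'a) \<Rightarrow> bool" where
  "correction d t \<longleftrightarrow> (\<forall>v\<in>C. t v \<in> F) \<and>
     (\<forall>v\<in>C. \<forall>w\<in>C. t (v \<oplus> w) = t v \<oplus> t w) \<and> (\<forall>c. \<forall>v\<in>C. t (c \<odot> v) = c \<odot> t v) \<and>
     (\<forall>v\<in>C. \<forall>w\<in>C. br (t v) w \<oplus> \<ominus> br (t w) v = d \<bullet> br v w)"

lemma correction_zero: "correction 0 (\<lambda>_. \<zero>)"
  by (simp add: correction_def act_zero_poly)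

lemma correction_mult_Xvar: "correction (q * Xvar \<alpha>) (\<lambda>v. q \<bullet> br v (z \<alpha>))"
  unfolding correction_def
proof (intro conjI ballI allI)
  fix v w assume vw: "v \<in> C" "w \<in> C"
  have "br (q \<bullet> br v (z \<alpha>)) w \<oplus> \<ominus> br (q \<bullet> br w (z \<alpha>)) v =
        q \<bullet> (br (br v (z \<alpha>)) w \<oplus> \<ominus> br (br w (z \<alpha>)) v)"
    using vw by (simp add: act_br act_add act_neg)
  also have "\<dots> = q \<bullet> br (br v w) (z \<alpha>)" using jacobi_br_br[of v w "z \<alpha>"] vw by simp
  also have "\<dots> = (q * Xvar \<alpha>) \<bullet> br v w" using vw by (simp add: act_mult act_Xvar)
  finally show "br (q \<bullet> br v (z \<alpha>)) w \<oplus> \<ominus> br (q \<bullet> br w (z \<alpha>)) v = (q * Xvar \<alpha>) \<bullet> br v w" .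
  show "q \<bullet> br (v \<oplus> w) (z \<alpha>) = q \<bullet> br v (z \<alpha>) \<oplus> q \<bullet> br w (z \<alpha>)"
    using vw by (simp add: br_add_left act_add)
qed (simp_all add: br_smul_left act_smul)

lemma correction_add:
  assumes t1: "correction p t1" and t2: "correction q t2"
  shows "correction (p + q) (\<lambda>v. t1 v \<oplus> t2 v)"
  unfolding correction_def
proof (intro conjI ballI allI)
  fix v w assume vw: "v \<in> C" "w \<in> C"
  then have C: "t1 v \<in> C" "t2 v \<in> C" "t1 w \<in> C" "t2 w \<in> C"
    using t1 t2 by (auto simp: correction_def)
  have "br (t1 v \<oplus> t2 v) w \<oplus> \<ominus> br (t1 w \<oplus> t2 w) v =
        br (t1 v) w \<oplus> \<ominus> br (t1 w) v \<oplus> (br (t2 v) w \<oplus> \<ominus> br (t2 w) v)"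
    using vw C by (simp add: br_add_left neg_add_distrib add_ac)
  also have "\<dots> = (p + q) \<bullet> br v w"
    using vw t1 t2 by (simp add: correction_def act_add_poly)
  finally show "br (t1 v \<oplus> t2 v) w \<oplus> \<ominus> br (t1 w \<oplus> t2 w) v = (p + q) \<bullet> br v w" .
  show "t1 (v \<oplus> w) \<oplus> t2 (v \<oplus> w) = t1 v \<oplus> t2 v \<oplus> (t1 w \<oplus> t2 w)"
    using vw C t1 t2 by (simp add: correction_def add_ac)
qed (use t1 t2 in \<open>auto simp: correction_def smul_add_right\<close>)

lemma exists_correction: "d \<in> Delta \<Longrightarrow> \<exists>t. correction d t"
  by (induction rule: Delta.induct) (auto intro: correction_zero correction_mult_Xvar correction_add)

lemma common_denominator:
  "finite E \<Longrightarrow> E \<subseteq> cl ` T \<Longrightarrow> \<exists>S. S \<notin> Delta \<and> (\<forall>Q\<in>E. \<exists>v m. v \<in> V \<and> m \<in> F \<and> Q = cl (v, m, S))"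
proof (induction E rule: finite_induct)
  case empty
  show ?case using one_notin_Delta by (intro exI[of _ 1]) simp
next
  case (insert Q E)
  have "E \<subseteq> cl ` T" using insert.prems by simp
  from insert.IH[OF this] obtain S where S: "S \<notin> Delta" "\<forall>Q\<in>E. \<exists>v m. v \<in> V \<and> m \<in> F \<and> Q = cl (v, m, S)"
    by (elim exE conjE)
  obtain tq where tq: "tq \<in> T" "Q = cl tq" using insert.prems by auto
  obtain v0 m0 s0 where q: "tq = (v0, m0, s0)" by (cases tq)
  have q0: "v0 \<in> V" "m0 \<in> F" "s0 \<notin> Delta" using tq q by auto
  have SS: "S * s0 \<notin> Delta" using S(1) q0(3) by (rule mult_notin_Delta)
  have "\<forall>Q'\<in>insert Q E. \<exists>v m. v \<in> V \<and> m \<in> F \<and> Q' = cl (v, m, S * s0)"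
  proof
    fix Q' assume "Q' \<in> insert Q E"
    then have "Q' = Q \<or> Q' \<in> E" by simp
    then show "\<exists>v m. v \<in> V \<and> m \<in> F \<and> Q' = cl (v, m, S * s0)"
    proof
      assume "Q' = Q"
      have "cl (v0, m0, s0) = cl (v0, S \<bullet> m0, S * s0)"
        by (rule loc_cls_eqI) (use q0 SS in \<open>simp_all add: act_mult act_commute[of m0 S s0]\<close>)
      then show ?thesis using \<open>Q' = Q\<close> tq q q0 by (intro exI[of _ v0] exI[of _ "S \<bullet> m0"]) simp
    next
      assume "Q' \<in> E"
      then obtain v m where vm: "v \<in> V" "m \<in> F" "Q' = cl (v, m, S)" using S(2) by blast
      have "cl (v, m, S) = cl (v, s0 \<bullet> m, S * s0)"
        by (rule loc_cls_eqI) (use vm S SS in \<open>simp_all add: act_mult\<close>)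
      then show ?thesis using vm by (intro exI[of _ v] exI[of _ "s0 \<bullet> m"]) simp
    qed
  qed
  then show ?case using SS by blast
qed

end

locale U_alg_denominator = U_alg A z for A :: "('k::field, 'a) lie_alg" and z :: "'i \<Rightarrow> 'a" +
  fixes den :: "('i, 'k) mpoly" and t :: "'a \<Rightarrow> 'a"
  assumes den_const: "Poly_Mapping.lookup den 0 = 1"
    and correction_t: "correction (den - 1) t"
begin

lemma den_notin_Delta[simp]: "den \<notin> Delta" using den_const by (simp add: Delta_iff_const_zero)
lemma den_nonzero: "den \<noteq> 0" using den_notin_Delta nonzero_if_notin_Delta by blast

lemma act_den: assumes "x \<in> F" shows "den \<bullet> x = x \<oplus> (den - 1) \<bullet> x"
proof -
  have "den = 1 + (den - 1)" by simp
  then have "den \<bullet> x = (1 + (den - 1)) \<bullet> x" by (rule arg_cong)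
  also have "\<dots> = 1 \<bullet> x \<oplus> (den - 1) \<bullet> x" by (rule act_add_poly[OF assms])
  also have "\<dots> = x \<oplus> (den - 1) \<bullet> x" using assms by simp
  finally show ?thesis .
qed

lemma t_Fit[simp]: "v \<in> C \<Longrightarrow> t v \<in> F"
  using correction_t by (simp add: correction_def)

lemma t_add: "v \<in> C \<Longrightarrow> w \<in> C \<Longrightarrow> t (v \<oplus> w) = t v \<oplus> t w"
  using correction_t by (simp add: correction_def)

lemma t_smul: "v \<in> C \<Longrightarrow> t (c \<odot> v) = c \<odot> t v"
  using correction_t by (simp add: correction_def)

lemma t_zero[simp]: "t \<zero> = \<zero>"
  using t_smul[of "\<zero>" 0] by simp

lemma t_neg: "v \<in> C \<Longrightarrow> t (\<ominus> v) = \<ominus> t v"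
  using t_smul[of v "-1"] neg_eq_smul[of v] neg_eq_smul[of "t v"] by simp

lemma br_t_antisym: "v \<in> C \<Longrightarrow> w \<in> C \<Longrightarrow> br (t v) w \<oplus> \<ominus> br (t w) v = (den - 1) \<bullet> br v w"
  using correction_t by (simp add: correction_def)

definition Frac :: "('i, 'k, 'a) ltriple set set" where "Frac = {cl (v, m, den) | v m. v \<in> V \<and> m \<in> F}"

definition clear_den :: "('i, 'k, 'a) ltriple set \<Rightarrow> 'a" where
  "clear_den Q = (let vm = (SOME vm. fst vm \<in> V \<and> snd vm \<in> F \<and> Q = cl (fst vm, snd vm, den))
            in (fst vm \<oplus> t (fst vm) \<oplus> snd vm))"

lemma Frac_cls_inj: assumes "v \<in> V" "m \<in> F" "v' \<in> V" "m' \<in> F" "cl (v, m, den) = cl (v', m', den)"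
  shows "v = v'" "m = m'"
proof -
  have t: "(v, m, den) \<in> T" "(v', m', den) \<in> T" using assms(1-4) by simp_all
  have "v = v' \<and> den \<bullet> m = den \<bullet> m'" by (rule iffD1[OF loc_cls_eq_iff[OF t] assms(5)])
  then have e: "v = v'" "den \<bullet> m = den \<bullet> m'" by auto
  show "v = v'" by (rule e(1))
  show "m = m'" using act_cancel[OF den_nonzero assms(2) assms(4) e(2)] .
qed

lemma clear_den_cls: assumes "v \<in> V" "m \<in> F" shows "clear_den (cl (v, m, den)) = v \<oplus> t v \<oplus> m"
proof -
  let ?vm = "SOME vm. fst vm \<in> V \<and> snd vm \<in> F \<and> cl (v, m, den) = cl (fst vm, snd vm, den)"
  have "\<exists>vm. fst vm \<in> V \<and> snd vm \<in> F \<and> cl (v, m, den) = cl (fst vm, snd vm, den)"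
    using assms by (intro exI[of _ "(v, m)"]) simp
  then have h: "fst ?vm \<in> V \<and> snd ?vm \<in> F \<and> cl (v, m, den) = cl (fst ?vm, snd ?vm, den)" by (rule someI_ex)
  then have "fst ?vm = v" "snd ?vm = m" using Frac_cls_inj[of v m "fst ?vm" "snd ?vm"] assms by auto
  then show ?thesis by (simp add: clear_den_def Let_def)
qed

lemma loc_zero_den: "la_zero D = cl (\<zero>, \<zero>, den)"
  unfolding loc_zero by (rule loc_cls_eqI) (simp_all add: one_notin_Delta den_notin_Delta)

lemma loc_add_den: assumes "v \<in> V" "m \<in> F" "v' \<in> V" "m' \<in> F"
  shows "la_add D (cl (v, m, den)) (cl (v', m', den)) = cl (v \<oplus> v', m \<oplus> m', den)"
proof -
  have "la_add D (cl (v, m, den)) (cl (v', m', den)) = cl (v \<oplus> v', den \<bullet> m \<oplus> den \<bullet> m', den * den)"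
    using assms by (simp add: loc_add)
  also have "\<dots> = cl (v \<oplus> v', m \<oplus> m', den)"
    by (rule loc_cls_eqI) (use assms den_notin_Delta in \<open>simp_all add: mult_notin_Delta act_mult act_add\<close>)
  finally show ?thesis .
qed

lemma loc_neg_den: assumes "v \<in> V" "m \<in> F" shows "la_neg D (cl (v, m, den)) = cl (\<ominus> v, \<ominus> m, den)"
  using assms by (simp add: loc_neg)

lemma loc_smul_den: assumes "v \<in> V" "m \<in> F" shows "la_smul D c (cl (v, m, den)) = cl (c \<odot> v, c \<odot> m, den)"
  using assms by (simp add: loc_smul)

lemma loc_br_den: assumes "v \<in> V" "m \<in> F" "v' \<in> V" "m' \<in> F"
  shows "la_br D (cl (v, m, den)) (cl (v', m', den)) = cl (\<zero>, den \<bullet> br v v' \<oplus> br m v' \<oplus> \<ominus> br m' v, den)"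
proof -
  have C: "v \<in> C" "v' \<in> C" "m \<in> C" "m' \<in> C" using assms by auto
  let ?Y = "den \<bullet> br v v' \<oplus> br m v' \<oplus> \<ominus> br m' v"
  have Y: "?Y \<in> F" using assms C by simp
  have X: "(den * den) \<bullet> br v v' \<oplus> den \<bullet> br m v' \<oplus> \<ominus> (den \<bullet> br m' v) = den \<bullet> ?Y"
    using assms C by (simp add: act_mult act_add act_neg)
  have "la_br D (cl (v, m, den)) (cl (v', m', den)) =
        cl (\<zero>, (den * den) \<bullet> br v v' \<oplus> den \<bullet> br m v' \<oplus> \<ominus> (den \<bullet> br m' v), den * den)"
    using assms by (simp add: loc_br)
  also have "\<dots> = cl (\<zero>, den \<bullet> ?Y, den * den)" by (simp only: X)
  also have "\<dots> = cl (\<zero>, ?Y, den)"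
    by (rule loc_cls_eqI) (use Y den_notin_Delta in \<open>simp_all add: mult_notin_Delta act_mult\<close>)
  finally show ?thesis .
qed

lemma FracE: assumes "Q \<in> Frac" obtains v m where "v \<in> V" "m \<in> F" "Q = cl (v, m, den)"
  using assms unfolding Frac_def by blast

lemma FracI: "v \<in> V \<Longrightarrow> m \<in> F \<Longrightarrow> cl (v, m, den) \<in> Frac"
  unfolding Frac_def by blast

lemma subalgebra_Frac: "subalgebra D Frac"
  unfolding subalgebra_def
proof (intro conjI ballI allI)
  show "Frac \<subseteq> la_carrier D"
  proof
    fix Q assume "Q \<in> Frac"
    then obtain v m where "v \<in> V" "m \<in> F" "Q = cl (v, m, den)" by (rule FracE)
    then show "Q \<in> la_carrier D" unfolding loc_carrier by (simp add: image_iff) (rule bexI[of _ "(v, m, den)"], simp_all)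
  qed
  show "la_zero D \<in> Frac" unfolding loc_zero_den by (rule FracI) simp_all
next
  fix x y assume "x \<in> Frac" "y \<in> Frac"
  then obtain v m v' m' where a: "v \<in> V" "m \<in> F" "x = cl (v, m, den)" "v' \<in> V" "m' \<in> F" "y = cl (v', m', den)"
    by (metis FracE)
  show "la_add D x y \<in> Frac" using a by (simp add: loc_add_den FracI)
  show "la_br D x y \<in> Frac" using a by (simp add: loc_br_den FracI)
next
  fix x assume "x \<in> Frac"
  then obtain v m where a: "v \<in> V" "m \<in> F" "x = cl (v, m, den)" by (rule FracE)
  show "la_neg D x \<in> Frac" using a by (simp add: loc_neg_den FracI)
next
  fix c x assume "x \<in> Frac"
  then obtain v m where a: "v \<in> V" "m \<in> F" "x = cl (v, m, den)" by (rule FracE)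
  show "la_smul D c x \<in> Frac" using a by (simp add: loc_smul_den FracI)
qed


lemma br_clear_den:
  assumes "v \<in> V" "m \<in> F" "v' \<in> V" "m' \<in> F"
  shows "br (v \<oplus> t v \<oplus> m) (v' \<oplus> t v' \<oplus> m') = den \<bullet> br v v' \<oplus> br m v' \<oplus> \<ominus> br m' v"
proof -
  have C: "v \<in> C" "v' \<in> C" "m \<in> C" "m' \<in> C" "t v \<in> C" "t v' \<in> C" using assms by auto
  let ?f = "t v \<oplus> m" and ?f' = "t v' \<oplus> m'"
  have fF: "?f \<in> F" "?f' \<in> F" using assms by auto
  have "br (v \<oplus> t v \<oplus> m) (v' \<oplus> t v' \<oplus> m') = br (v \<oplus> ?f) (v' \<oplus> ?f')"
    using C by (simp add: add_assoc)
  also have "\<dots> = br v v' \<oplus> br v ?f' \<oplus> (br ?f v' \<oplus> br ?f ?f')"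
    using C by (simp only: br_add_left br_add_right add_closed br_closed add_ac)
  also have "br ?f ?f' = \<zero>" using fF by simp
  also have "br v ?f' = \<ominus> br ?f' v" using C br_antisym[of ?f' v] by simp
  also have "br ?f v' = br (t v) v' \<oplus> br m v'" using C by (simp add: br_add_left)
  also have "br ?f' v = br (t v') v \<oplus> br m' v" using C by (simp add: br_add_left)
  finally have L: "br (v \<oplus> t v \<oplus> m) (v' \<oplus> t v' \<oplus> m') =
     br v v' \<oplus> \<ominus> (br (t v') v \<oplus> br m' v) \<oplus> (br (t v) v' \<oplus> br m v' \<oplus> \<zero>)" .
  have "den \<bullet> br v v' = br v v' \<oplus> (den - 1) \<bullet> br v v'" using C by (simp add: act_den)
  also have "(den - 1) \<bullet> br v v' = br (t v) v' \<oplus> \<ominus> br (t v') v" using br_t_antisym C by simp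
  finally have R: "den \<bullet> br v v' = br v v' \<oplus> (br (t v) v' \<oplus> \<ominus> br (t v') v)" .
  show ?thesis unfolding L R using C by (simp add: neg_add_distrib add_ac)
qed

lemma inj_on_clear_den: "inj_on clear_den Frac"
proof (rule inj_onI)
  fix x y assume "x \<in> Frac" "y \<in> Frac" and e: "clear_den x = clear_den y"
  then obtain v m v' m' where a: "v \<in> V" "m \<in> F" "x = cl (v, m, den)" "v' \<in> V" "m' \<in> F" "y = cl (v', m', den)"
    by (metis FracE)
  have C: "v \<in> C" "v' \<in> C" "m \<in> C" "m' \<in> C" "t v \<in> C" "t v' \<in> C" using a by auto
  have "v \<oplus> (t v \<oplus> m) = v' \<oplus> (t v' \<oplus> m')"
    using e a C by (simp add: clear_den_cls add_assoc)
  then have vv: "v = v'" and "t v \<oplus> m = t v' \<oplus> m'"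
    using decomp_unique[of v v' "t v \<oplus> m" "t v' \<oplus> m'"] a by auto
  then have "m = m'" using C by simp
  then show "x = y" using a vv by simp
qed

lemma embedding_on_clear_den: "embedding_on D A clear_den Frac"
  unfolding embedding_on_def
proof (intro conjI ballI allI)
  show "clear_den (la_zero D) = \<zero>" unfolding loc_zero_den by (simp add: clear_den_cls)
next
  fix x y assume "x \<in> Frac" "y \<in> Frac"
  then obtain v m v' m' where a: "v \<in> V" "m \<in> F" "x = cl (v, m, den)" "v' \<in> V" "m' \<in> F" "y = cl (v', m', den)"
    by (metis FracE)
  have C: "v \<in> C" "v' \<in> C" "m \<in> C" "m' \<in> C" "t v \<in> C" "t v' \<in> C" using a by auto
  show "clear_den (la_add D x y) = clear_den x \<oplus> clear_den y"
    using a C by (simp add: loc_add_den clear_den_cls t_add add_ac)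
  show "clear_den (la_br D x y) = br (clear_den x) (clear_den y)"
    using a C by (simp add: loc_br_den clear_den_cls br_clear_den)
next
  fix x assume "x \<in> Frac"
  then obtain v m where a: "v \<in> V" "m \<in> F" "x = cl (v, m, den)" by (rule FracE)
  have C: "v \<in> C" "m \<in> C" "t v \<in> C" using a by auto
  show "clear_den (la_neg D x) = \<ominus> clear_den x" using a C by (simp add: loc_neg_den clear_den_cls t_neg neg_add_distrib)
  show "clear_den x \<in> C" using a C by (simp add: clear_den_cls)
next
  fix c x assume "x \<in> Frac"
  then obtain v m where a: "v \<in> V" "m \<in> F" "x = cl (v, m, den)" by (rule FracE)
  have C: "v \<in> C" "m \<in> C" "t v \<in> C" using a by auto
  show "clear_den (la_smul D c x) = c \<odot> clear_den x" using a C by (simp add: loc_smul_den clear_den_cls t_smul smul_add_right)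
next
  show "inj_on clear_den Frac" by (rule inj_on_clear_den)
qed

end

context U_alg
begin

lemma finite_loc_subset_embeds:
  assumes "finite E" and "E \<subseteq> la_carrier D"
  shows "\<exists>S h. E \<subseteq> S \<and> subalgebra D S \<and> embedding_on D A h S"
proof -
  have "E \<subseteq> cl ` T" using assms(2) by (simp add: loc_carrier)
  then obtain s where s: "s \<notin> Delta" "\<forall>Q\<in>E. \<exists>v m. v \<in> V \<and> m \<in> F \<and> Q = cl (v, m, s)"
    using common_denominator[OF assms(1)] by blast
  define k :: "('i, 'k) mpoly" where "k = Poly_Mapping.single 0 (inverse (Poly_Mapping.lookup s 0))"
  define den where "den = k * s"
  have den_const: "Poly_Mapping.lookup den 0 = 1"
    using s(1) by (simp add: den_def k_def lookup_mult_0 lookup_single_0 Delta_iff_const_zero)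
  then have "den - 1 \<in> Delta" by (simp add: Delta_iff_const_zero lookup_minus)
  then obtain t where t: "correction (den - 1) t" using exists_correction by blast
  interpret N: U_alg_denominator A z den t
    by unfold_locales (use den_const t in auto)
  have "E \<subseteq> N.Frac"
  proof
    fix Q assume "Q \<in> E"
    then obtain v m where vm: "v \<in> V" "m \<in> F" "Q = cl (v, m, s)" using s(2) by blast
    have "cl (v, m, s) = cl (v, k \<bullet> m, den)"
      by (rule loc_cls_eqI)
        (use vm s(1) N.den_notin_Delta in \<open>simp_all add: den_def act_mult act_commute[of m k s]\<close>)
    then show "Q \<in> N.Frac" using vm by (simp add: N.FracI)
  qed
  then show ?thesis using N.subalgebra_Frac N.embedding_on_clear_den by blast
qed

end

theorem proposition4p2p2:
  fixes A :: "('k::field, 'a) lie_alg" and z :: "'i \<Rightarrow> 'a"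
  assumes "lie_alg A" and "metabelian A" and "U_algebra A z"
  shows "universally_equivalent A (loc_Delta A z)"
proof -
  interpret U_alg A z by unfold_locales (fact assms)+
  have "satisfies A p \<longleftrightarrow> satisfies (loc_Delta A z) p" if "universal p" for p
  proof
    assume "satisfies A p"
    with \<open>universal p\<close> show "satisfies (loc_Delta A z) p"
      by (rule satisfies_universal_transfer) (rule finite_loc_subset_embeds)
  next
    assume "satisfies (loc_Delta A z) p"
    with \<open>universal p\<close> show "satisfies A p"
      by (rule satisfies_universal_transfer) (use subalgebra_carrier embedding_on_embed in blast)
  qed
  then show ?thesis by (simp add: universally_equivalent_def universal_sentence_def)
qed

end
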